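(* Let $n\ge 2$, let $F_n$ be the free group on $x_1,\dots,x_n$, let $PW_n$ be the welded pure braid (McCool) group with generators $\xi_{i,j}$ ($1\le i\neq j\le n$), and let $F_n\rtimes PW_n$ be the semidirect product described in the context. For $1\le i\neq j\le n$ let $M_{i,j}$ be the $n\times n$ matrix over the group algebra $\mathbb{C}[F_n\rtimes PW_n]$ which equals the identity matrix except in its $i$-th row, whose $(i,i)$ entry is $x_j$, whose $(i,j)$ entry is $1-x_jx_ix_j^{-1}$, and whose other entries are $0$; and let $\mathcal{C}(\xi_{i,j})=\xi_{i,j}\cdot M_{i,j}$ be the matrix obtained by left-multiplying every entry of $M_{i,j}$ by $\xi_{i,j}$. Then the assignment $\xi_{i,j}\mapsto\mathcal{C}(\xi_{i,j})$ determines a faithful (injective) matrix representation $\Psi_n:PW_n\to GL(n,\mathbb{C}[F_n\rtimes PW_n])$.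
   Context: The group $PW_n$ is given by generators $\xi_{i,j}$, $1\le i\neq j\le n$, subject to the McCool relations: $[\xi_{i,j},\xi_{s,t}]=1$ if $\{i,j\}\cap\{s,t\}=\emptyset$; $[\xi_{i,j},\xi_{k,j}]=1$ for $i,j,k$ distinct; $[\xi_{i,j}\xi_{k,j},\xi_{i,k}]=1$ for $i,j,k$ distinct, where $[a,b]=a^{-1}b^{-1}ab$. (Equivalently, $PW_n$ is the kernel of the map from the welded braid group $WB_n$ to the symmetric group sending $\sigma_i,\tau_i\mapsto\tau_i$.) For each generator, let $\varphi_{i,j}$ be the automorphism of $F_n$ with $\varphi_{i,j}(x_i)=x_jx_ix_j^{-1}$ and $\varphi_{i,j}(x_k)=x_k$ for $k\neq i$. The semidirect product $F_n\rtimes PW_n$ is the group generated by $F_n$ and $PW_n$, containing $F_n$ as a normal subgroup with $(F_n\rtimes PW_n)/F_n\cong PW_n$, in which $\xi_{i,j}^{-1}\,x_k\,\xi_{i,j}=\varphi_{i,j}(x_k)$ for all $k$ (this is the semidirect product coming from the faithful Artin embedding of $PW_n$ into $\mathrm{Aut}(F_n)$). Matrices are multiplied in the usual way over the noncommutative ring $\mathbb{C}[F_n\rtimes PW_n]$. *)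

theory Defs
  imports Complex_Main "HOL-Algebra.Group"
begin

text \<open>A word over an alphabet: letters with exponent True (= +1) or False (= -1).\<close>
type_synonym 'a word = "('a \<times> bool) list"

definition inv_word :: "'a word \<Rightarrow> 'a word" where
  "inv_word w = rev (map (\<lambda>(a, b). (a, \<not> b)) w)"

definition comm_word :: "'a word \<Rightarrow> 'a word \<Rightarrow> 'a word" where
  "comm_word u v = inv_word u @ inv_word v @ u @ v"

inductive pres_rel :: "'a word set \<Rightarrow> 'a word \<Rightarrow> 'a word \<Rightarrow> bool" for R where
  pr_refl: "pres_rel R w w"
| pr_sym: "pres_rel R u v \<Longrightarrow> pres_rel R v u"
| pr_trans: "pres_rel R u v \<Longrightarrow> pres_rel R v w \<Longrightarrow> pres_rel R u w"
| pr_cancel: "pres_rel R (u @ [(a, b), (a, \<not> b)] @ v) (u @ v)"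
| pr_relator: "r \<in> R \<Longrightarrow> pres_rel R (u @ r @ v) (u @ v)"

definition pres_class :: "'a word set \<Rightarrow> 'a word \<Rightarrow> 'a word set" where
  "pres_class R w = {v. pres_rel R w v}"

definition presented_group :: "'a set \<Rightarrow> 'a word set \<Rightarrow> 'a word set monoid" where
  "presented_group S R =
     \<lparr> carrier = {pres_class R w | w. set w \<subseteq> S \<times> UNIV},
       mult = (\<lambda>X Y. \<Union>u\<in>X. \<Union>v\<in>Y. pres_class R (u @ v)),
       one = pres_class R [] \<rparr>"

definition gen_class :: "'a word set \<Rightarrow> 'a \<Rightarrow> 'a word set" where
  "gen_class R a = pres_class R [(a, True)]"

text \<open>Generator xi_{i,j} is the letter (i,j), 1 <= i ~= j <= n.\<close>
definition pw_gens :: "nat \<Rightarrow> (nat \<times> nat) set" where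
  "pw_gens n = {(i, j). i \<in> {1..n} \<and> j \<in> {1..n} \<and> i \<noteq> j}"

definition mccool_rels :: "nat \<Rightarrow> ('a \<Rightarrow> 'b) \<Rightarrow> (nat \<times> nat \<Rightarrow> 'a) \<Rightarrow> 'b word set" where
  "mccool_rels n emb g =
     (let l = (\<lambda>i j. (emb (g (i, j)), True)) in
      {comm_word [l i j] [l s t] | i j s t.
         (i, j) \<in> pw_gens n \<and> (s, t) \<in> pw_gens n \<and> {i, j} \<inter> {s, t} = {}}
    \<union> {comm_word [l i j] [l k j] | i j k.
         i \<in> {1..n} \<and> j \<in> {1..n} \<and> k \<in> {1..n} \<and> i \<noteq> j \<and> j \<noteq> k \<and> i \<noteq> k}
    \<union> {comm_word [l i j, l k j] [l i k] | i j k.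
         i \<in> {1..n} \<and> j \<in> {1..n} \<and> k \<in> {1..n} \<and> i \<noteq> j \<and> j \<noteq> k \<and> i \<noteq> k})"

definition PW_rels :: "nat \<Rightarrow> (nat \<times> nat) word set" where
  "PW_rels n = mccool_rels n id id"

definition PW :: "nat \<Rightarrow> (nat \<times> nat) word set monoid" where
  "PW n = presented_group (pw_gens n) (PW_rels n)"

text \<open>Relations: the McCool relations
  among the xi's, and xi_{i,j}^-1 x_k xi_{i,j} = phi_{i,j}(x_k), i.e.
  xi^-1 x_k xi = x_k for k ~= i and xi^-1 x_i xi = x_j x_i x_j^-1.\<close>
datatype sgen = X nat | Xi nat nat

definition SD_gens :: "nat \<Rightarrow> sgen set" where
  "SD_gens n = {X k | k. k \<in> {1..n}} \<union> {Xi i j | i j. (i, j) \<in> pw_gens n}"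

definition SD_rels :: "nat \<Rightarrow> sgen word set" where
  "SD_rels n = mccool_rels n id (\<lambda>(i, j). Xi i j)
    \<union> {[(Xi i j, False), (X k, True), (Xi i j, True), (X k, False)] | i j k.
         (i, j) \<in> pw_gens n \<and> k \<in> {1..n} \<and> k \<noteq> i}
    \<union> {[(Xi i j, False), (X i, True), (Xi i j, True), (X j, True), (X i, False), (X j, False)]
         | i j. (i, j) \<in> pw_gens n}"

definition SD :: "nat \<Rightarrow> sgen word set monoid" where
  "SD n = presented_group (SD_gens n) (SD_rels n)"

definition x_el :: "nat \<Rightarrow> nat \<Rightarrow> sgen word set" where
  "x_el n k = gen_class (SD_rels n) (X k)"

definition xi_el :: "nat \<Rightarrow> nat \<Rightarrow> nat \<Rightarrow> sgen word set" where
  "xi_el n i j = gen_class (SD_rels n) (Xi i j)"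

text \<open>Elements of C[G]: finitely supported functions G \<Rightarrow> complex.\<close>
definition delta :: "'g \<Rightarrow> 'g \<Rightarrow> complex" where
  "delta g = (\<lambda>z. if z = g then 1 else 0)"

definition conv :: "('g, 'b) monoid_scheme \<Rightarrow> ('g \<Rightarrow> complex) \<Rightarrow> ('g \<Rightarrow> complex) \<Rightarrow> 'g \<Rightarrow> complex" where
  "conv G f g = (\<lambda>z. \<Sum>p\<in>{x. f x \<noteq> 0} \<times> {y. g y \<noteq> 0}.
                    if fst p \<otimes>\<^bsub>G\<^esub> snd p = z then f (fst p) * g (snd p) else 0)"

definition in_group_algebra :: "('g, 'b) monoid_scheme \<Rightarrow> ('g \<Rightarrow> complex) \<Rightarrow> bool" where
  "in_group_algebra G f \<longleftrightarrow> finite {x. f x \<noteq> 0} \<and> {x. f x \<noteq> 0} \<subseteq> carrier G"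

text \<open>n x n matrices, indexed by 1..n, entries zero outside that range.\<close>
type_synonym 'g gmat = "nat \<Rightarrow> nat \<Rightarrow> 'g \<Rightarrow> complex"

definition is_mat :: "('g, 'b) monoid_scheme \<Rightarrow> nat \<Rightarrow> 'g gmat \<Rightarrow> bool" where
  "is_mat G n A \<longleftrightarrow> (\<forall>i j. (i \<notin> {1..n} \<or> j \<notin> {1..n}) \<longrightarrow> A i j = (\<lambda>_. 0))
                     \<and> (\<forall>i j. in_group_algebra G (A i j))"

definition mat_mult :: "('g, 'b) monoid_scheme \<Rightarrow> nat \<Rightarrow> 'g gmat \<Rightarrow> 'g gmat \<Rightarrow> 'g gmat" where
  "mat_mult G n A B = (\<lambda>i j. if i \<in> {1..n} \<and> j \<in> {1..n}
        then (\<lambda>z. \<Sum>k\<in>{1..n}. conv G (A i k) (B k j) z) else (\<lambda>_. 0))"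

definition mat_one :: "('g, 'b) monoid_scheme \<Rightarrow> nat \<Rightarrow> 'g gmat" where
  "mat_one G n = (\<lambda>i j. if i \<in> {1..n} \<and> j \<in> {1..n} \<and> i = j
        then delta \<one>\<^bsub>G\<^esub> else (\<lambda>_. 0))"

definition GL :: "('g, 'b) monoid_scheme \<Rightarrow> nat \<Rightarrow> 'g gmat monoid" where
  "GL G n = \<lparr> carrier = {A. is_mat G n A \<and> (\<exists>B. is_mat G n B \<and>
                   mat_mult G n A B = mat_one G n \<and> mat_mult G n B A = mat_one G n)},
              mult = mat_mult G n,
              one = mat_one G n \<rparr>"

definition M_mat :: "nat \<Rightarrow> nat \<Rightarrow> nat \<Rightarrow> sgen word set gmat" where
  "M_mat n i j = (\<lambda>a b.
     if a \<in> {1..n} \<and> b \<in> {1..n} then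
       (if a = i then
          (if b = i then delta (x_el n j)
           else if b = j then (\<lambda>z. delta \<one>\<^bsub>SD n\<^esub> z
                 - delta (x_el n j \<otimes>\<^bsub>SD n\<^esub> x_el n i \<otimes>\<^bsub>SD n\<^esub> inv\<^bsub>SD n\<^esub> x_el n j) z)
           else (\<lambda>_. 0))
        else (if a = b then delta \<one>\<^bsub>SD n\<^esub> else (\<lambda>_. 0)))
     else (\<lambda>_. 0))"

definition C_mat :: "nat \<Rightarrow> nat \<Rightarrow> nat \<Rightarrow> sgen word set gmat" where
  "C_mat n i j = (\<lambda>a b. conv (SD n) (delta (xi_el n i j)) (M_mat n i j a b))"

end

(* Killing the generators x_k gives a retraction rho of the semidirect product F_n x PW_n onto
   PW_n. Every entry of C(xi_ij) and of its inverse is supported on group elements that rho maps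
   to xi_ij, resp. to its inverse, and matrix multiplication multiplies these degrees; so every
   entry of Psi(g) is supported on the fibre of rho over g. If Psi(g) is the identity matrix, its
   diagonal entry at the unit forces g = rho(1) = 1. That the matrices C(xi_ij) satisfy the McCool
   relations, so that Psi exists at all, is a direct computation with matrices that differ from
   scalar matrices in at most two rows. *)

theory Submission
  imports Defs "HOL-Algebra.Coset"
begin

context group
begin

lemma mult_inv_cancel [simp]: "x \<in> carrier G \<Longrightarrow> y \<in> carrier G \<Longrightarrow> x \<otimes> (inv x \<otimes> y) = y"
  by (simp add: m_assoc[symmetric])

lemma inv_mult_cancel [simp]: "x \<in> carrier G \<Longrightarrow> y \<in> carrier G \<Longrightarrow> inv x \<otimes> (x \<otimes> y) = y"
  by (simp add: m_assoc[symmetric])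

lemma mult_eq_mult_if_relator:
  assumes "a \<in> carrier G" "b \<in> carrier G" "c \<in> carrier G"
    and "inv b \<otimes> (a \<otimes> (b \<otimes> inv c)) = \<one>"
  shows "a \<otimes> b = b \<otimes> c"
proof -
  have "a \<otimes> (b \<otimes> inv c) = b"
    using assms inv_solve_left'[of \<one> b "a \<otimes> (b \<otimes> inv c)"] by simp
  then show ?thesis
    using assms inv_solve_right'[of b "a \<otimes> b" c] by (simp add: m_assoc)
qed

lemma inv_mult_eq_mult_inv:
  assumes "a \<in> carrier G" "b \<in> carrier G" "c \<in> carrier G" and "a \<otimes> b = b \<otimes> c"
  shows "inv a \<otimes> b = b \<otimes> inv c"
proof -
  have "inv a \<otimes> b = inv a \<otimes> (b \<otimes> c) \<otimes> inv c"
    using assms(1-3) by (simp add: m_assoc)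
  also have "\<dots> = b \<otimes> inv c"
    using assms(1-3) by (simp add: assms(4)[symmetric])
  finally show ?thesis .
qed

end

section \<open>Presented groups\<close>

lemma pres_rel_append_left: "pres_rel R u v \<Longrightarrow> pres_rel R (p @ u) (p @ v)"
proof (induction rule: pres_rel.induct)
  case (pr_cancel u a b v)
  show ?case using pres_rel.pr_cancel[of R "p @ u" a b v] by simp
next
  case (pr_relator r u v)
  show ?case using pres_rel.pr_relator[OF pr_relator, of "p @ u" v] by simp
qed (metis pres_rel.pr_refl, metis pres_rel.pr_sym, metis pres_rel.pr_trans)

lemma pres_rel_append_right: "pres_rel R u v \<Longrightarrow> pres_rel R (u @ q) (v @ q)"
proof (induction rule: pres_rel.induct)
  case (pr_cancel u a b v)
  show ?case using pres_rel.pr_cancel[of R u a b "v @ q"] by simp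
next
  case (pr_relator r u v)
  show ?case using pres_rel.pr_relator[OF pr_relator, of u "v @ q"] by simp
qed (metis pres_rel.pr_refl, metis pres_rel.pr_sym, metis pres_rel.pr_trans)

lemma pres_rel_append: "pres_rel R u v \<Longrightarrow> pres_rel R u' v' \<Longrightarrow> pres_rel R (u @ u') (v @ v')"
  by (meson pres_rel.pr_trans pres_rel_append_left pres_rel_append_right)

lemma mem_pres_class_iff: "w \<in> pres_class R u \<longleftrightarrow> pres_rel R u w"
  by (simp add: pres_class_def)

lemma pres_class_eq_iff: "pres_class R u = pres_class R v \<longleftrightarrow> pres_rel R u v"
proof
  assume "pres_class R u = pres_class R v"
  then show "pres_rel R u v"
    using pres_rel.pr_refl[of R v] by (auto simp: pres_class_def)
next
  assume "pres_rel R u v"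
  then have "pres_rel R u = pres_rel R v"
    by (intro ext) (meson pres_rel.pr_sym pres_rel.pr_trans)
  then show "pres_class R u = pres_class R v"
    by (simp add: pres_class_def)
qed

lemma carrier_presented_group:
  "carrier (presented_group S R) = {pres_class R w | w. set w \<subseteq> S \<times> UNIV}"
  by (simp add: presented_group_def)

lemma one_presented_group: "\<one>\<^bsub>presented_group S R\<^esub> = pres_class R []"
  by (simp add: presented_group_def)

lemma mult_presented_group:
  "pres_class R u \<otimes>\<^bsub>presented_group S R\<^esub> pres_class R v = pres_class R (u @ v)"
proof -
  have eq: "pres_class R (u' @ v') = pres_class R (u @ v)"
    if "u' \<in> pres_class R u" "v' \<in> pres_class R v" for u' v'
    using that pres_rel_append by (metis mem_pres_class_iff pres_class_eq_iff)
  have "pres_class R u \<noteq> {}" "pres_class R v \<noteq> {}"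
    using pres_rel.pr_refl by (auto simp: pres_class_def)
  then have "(\<Union>u'\<in>pres_class R u. \<Union>v'\<in>pres_class R v. pres_class R (u' @ v')) = pres_class R (u @ v)"
    by (simp add: eq cong: SUP_cong)
  then show ?thesis
    by (simp add: presented_group_def)
qed

lemma inv_word_simps [simp]:
  "inv_word [] = []"
  "inv_word (x # w) = inv_word w @ [(fst x, \<not> snd x)]"
  "inv_word (u @ v) = inv_word v @ inv_word u"
  by (auto simp: inv_word_def split: prod.splits)

lemma set_inv_word_subset_iff: "set (inv_word w) \<subseteq> S \<times> UNIV \<longleftrightarrow> set w \<subseteq> S \<times> UNIV"
  by (auto simp: inv_word_def)

lemma pres_rel_inv_word_append: "pres_rel R (inv_word w @ w) []"
proof (induction w)
  case Nil
  then show ?case by (simp add: pres_rel.pr_refl)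
next
  case (Cons x w)
  obtain a b where x: "x = (a, b)" by force
  have "pres_rel R (inv_word w @ [(a, \<not> b), (a, \<not> \<not> b)] @ w) (inv_word w @ w)"
    by (rule pres_rel.pr_cancel)
  then show ?case
    using x pres_rel.pr_trans[OF _ Cons.IH] by simp
qed

lemma group_presented_group: "group (presented_group S R)"
proof (rule groupI)
  fix x y
  assume "x \<in> carrier (presented_group S R)" "y \<in> carrier (presented_group S R)"
  then obtain u v where "x = pres_class R u" "y = pres_class R v"
    "set u \<subseteq> S \<times> UNIV" "set v \<subseteq> S \<times> UNIV"
    by (auto simp: carrier_presented_group)
  then show "x \<otimes>\<^bsub>presented_group S R\<^esub> y \<in> carrier (presented_group S R)"
    by (auto simp: mult_presented_group carrier_presented_group intro!: exI[of _ "u @ v"])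
next
  show "\<one>\<^bsub>presented_group S R\<^esub> \<in> carrier (presented_group S R)"
    by (auto simp: one_presented_group carrier_presented_group intro!: exI[of _ "[]"])
next
  fix x y z
  assume "x \<in> carrier (presented_group S R)" "y \<in> carrier (presented_group S R)"
    "z \<in> carrier (presented_group S R)"
  then show "x \<otimes>\<^bsub>presented_group S R\<^esub> y \<otimes>\<^bsub>presented_group S R\<^esub> z =
      x \<otimes>\<^bsub>presented_group S R\<^esub> (y \<otimes>\<^bsub>presented_group S R\<^esub> z)"
    by (auto simp: carrier_presented_group mult_presented_group)
next
  fix x
  assume "x \<in> carrier (presented_group S R)"
  then show "\<one>\<^bsub>presented_group S R\<^esub> \<otimes>\<^bsub>presented_group S R\<^esub> x = x"
    by (auto simp: carrier_presented_group mult_presented_group one_presented_group)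
next
  fix x
  assume "x \<in> carrier (presented_group S R)"
  then obtain u where u: "x = pres_class R u" "set u \<subseteq> S \<times> UNIV"
    by (auto simp: carrier_presented_group)
  have "pres_class R (inv_word u) \<in> carrier (presented_group S R)"
    using u set_inv_word_subset_iff[of u S]
    by (auto simp: carrier_presented_group intro!: exI[of _ "inv_word u"])
  moreover have "pres_class R (inv_word u) \<otimes>\<^bsub>presented_group S R\<^esub> x = \<one>\<^bsub>presented_group S R\<^esub>"
    using u by (simp add: mult_presented_group one_presented_group pres_class_eq_iff
        pres_rel_inv_word_append)
  ultimately show "\<exists>y\<in>carrier (presented_group S R).
      y \<otimes>\<^bsub>presented_group S R\<^esub> x = \<one>\<^bsub>presented_group S R\<^esub>"
    by blast
qed

lemma gen_class_closed: "a \<in> S \<Longrightarrow> gen_class R a \<in> carrier (presented_group S R)"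
  by (auto simp: gen_class_def carrier_presented_group intro!: exI[of _ "[(a, True)]"])

definition eval_word :: "('b, 'c) monoid_scheme \<Rightarrow> ('a \<Rightarrow> 'b) \<Rightarrow> 'a word \<Rightarrow> 'b" where
  "eval_word H f w = foldr (\<lambda>(a, b) y. (if b then f a else inv\<^bsub>H\<^esub> f a) \<otimes>\<^bsub>H\<^esub> y) w \<one>\<^bsub>H\<^esub>"

lemma eval_word_Nil [simp]: "eval_word H f [] = \<one>\<^bsub>H\<^esub>"
  and eval_word_Cons [simp]:
    "eval_word H f ((a, b) # w) = (if b then f a else inv\<^bsub>H\<^esub> f a) \<otimes>\<^bsub>H\<^esub> eval_word H f w"
  by (simp_all add: eval_word_def)

lemma eval_word_cong:
  "(\<And>a b. (a, b) \<in> set w \<Longrightarrow> f a = g a) \<Longrightarrow> eval_word H f w = eval_word H g w"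
proof (induction w)
  case (Cons x w)
  then show ?case
    by (cases x) (metis eval_word_Cons list.set_intros)
qed simp

lemma eval_word_map_letters: "eval_word H f (map (apfst \<phi>) w) = eval_word H (f \<circ> \<phi>) w"
  by (induction w) auto

context group
begin

lemma eval_word_closed:
  "f \<in> S \<rightarrow> carrier G \<Longrightarrow> set w \<subseteq> S \<times> UNIV \<Longrightarrow> eval_word G f w \<in> carrier G"
  by (induction w) (auto simp: Pi_iff)

lemma eval_word_append:
  assumes "f \<in> S \<rightarrow> carrier G" "set u \<subseteq> S \<times> UNIV" "set v \<subseteq> S \<times> UNIV"
  shows "eval_word G f (u @ v) = eval_word G f u \<otimes> eval_word G f v"
  using assms eval_word_closed[OF assms(1)] by (induction u) (auto simp: Pi_iff m_assoc)

lemma eval_word_inv_word: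
  assumes "f \<in> S \<rightarrow> carrier G" "set w \<subseteq> S \<times> UNIV"
  shows "eval_word G f (inv_word w) = inv eval_word G f w"
  using assms(2)
proof (induction w)
  case (Cons x w)
  obtain a b where x: "x = (a, b)" by force
  have "set (inv_word w) \<subseteq> S \<times> UNIV"
    using Cons set_inv_word_subset_iff by auto
  then show ?case
    using Cons x assms(1) eval_word_closed[OF assms(1)]
    by (auto simp: eval_word_append[OF assms(1)] inv_mult_group Pi_iff)
qed simp

lemma eval_comm_word_eq_one_iff:
  assumes "f \<in> S \<rightarrow> carrier G" "set u \<subseteq> S \<times> UNIV" "set v \<subseteq> S \<times> UNIV"
  shows "eval_word G f (comm_word u v) = \<one> \<longleftrightarrow>
    eval_word G f u \<otimes> eval_word G f v = eval_word G f v \<otimes> eval_word G f u"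
proof -
  define x y where "x = eval_word G f u" and "y = eval_word G f v"
  have xy: "x \<in> carrier G" "y \<in> carrier G"
    using assms eval_word_closed by (auto simp: x_def y_def)
  have "eval_word G f (comm_word u v) = inv x \<otimes> inv y \<otimes> x \<otimes> y"
    using assms xy set_inv_word_subset_iff[of _ S]
    by (simp add: comm_word_def x_def y_def eval_word_append eval_word_inv_word m_assoc)
  also have "\<dots> = inv (y \<otimes> x) \<otimes> (x \<otimes> y)"
    using xy by (simp add: inv_mult_group m_assoc)
  finally show ?thesis
    using xy inv_solve_left'[of \<one> "y \<otimes> x" "x \<otimes> y"] by (auto simp: x_def y_def)
qed

lemma eval_word_pres_rel:
  assumes "\<And>a. f a \<in> carrier G" "\<And>r. r \<in> R \<Longrightarrow> eval_word G f r = \<one>"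
    and "pres_rel R u v"
  shows "eval_word G f u = eval_word G f v"
proof -
  have f: "f \<in> UNIV \<rightarrow> carrier G"
    using assms(1) by blast
  from assms(3) show ?thesis
  proof (induction rule: pres_rel.induct)
    case (pr_cancel u a b v)
    then show ?case
      using assms(1) eval_word_closed[OF f] by (simp add: eval_word_append[OF f])
  next
    case (pr_relator r u v)
    then show ?case
      using f assms(2) eval_word_closed[OF f] by (simp add: eval_word_append)
  qed auto
qed

end

lemma presented_group_hom:
  assumes H: "group H" and f: "f \<in> S \<rightarrow> carrier H"
    and R: "\<And>r. r \<in> R \<Longrightarrow> set r \<subseteq> S \<times> UNIV"
    and rels: "\<And>r. r \<in> R \<Longrightarrow> eval_word H f r = \<one>\<^bsub>H\<^esub>"
  shows "\<exists>h \<in> hom (presented_group S R) H. \<forall>a\<in>S. h (gen_class R a) = f a"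
proof -
  interpret H: group H by (rule H)
  \<comment> \<open>A derivation in \<open>pres_rel\<close> may pass through words with letters outside \<open>S\<close>.\<close>
  define g where "g a = (if a \<in> S then f a else \<one>\<^bsub>H\<^esub>)" for a
  have g: "g a \<in> carrier H" for a
    using f by (auto simp: g_def)
  then have g_Pi: "g \<in> UNIV \<rightarrow> carrier H"
    by blast
  have g_rels: "eval_word H g r = \<one>\<^bsub>H\<^esub>" if "r \<in> R" for r
    using rels[OF that] R[OF that] by (subst eval_word_cong[of _ g f]) (auto simp: g_def)
  define h where "h X = eval_word H g (SOME w. w \<in> X)" for X
  have h_class: "h (pres_class R w) = eval_word H g w" for w
  proof -
    have "w \<in> pres_class R w"
      by (simp add: mem_pres_class_iff pres_rel.pr_refl)
    then have "pres_rel R w (SOME w'. w' \<in> pres_class R w)"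
      unfolding mem_pres_class_iff[symmetric] by (rule someI)
    from H.eval_word_pres_rel[OF g g_rels this] show ?thesis
      by (simp add: h_def)
  qed
  have "h \<in> hom (presented_group S R) H"
  proof (rule homI)
    fix x
    assume "x \<in> carrier (presented_group S R)"
    then obtain w where "x = pres_class R w"
      by (auto simp: carrier_presented_group)
    then show "h x \<in> carrier H"
      using H.eval_word_closed[OF g_Pi] by (simp add: h_class)
  next
    fix x y
    assume "x \<in> carrier (presented_group S R)" "y \<in> carrier (presented_group S R)"
    then obtain u v where "x = pres_class R u" "y = pres_class R v"
      by (auto simp: carrier_presented_group)
    then show "h (x \<otimes>\<^bsub>presented_group S R\<^esub> y) = h x \<otimes>\<^bsub>H\<^esub> h y"
      using H.eval_word_append[OF g_Pi] by (simp add: mult_presented_group h_class)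
  qed
  moreover have "h (gen_class R a) = f a" if "a \<in> S" for a
    using that f by (auto simp: gen_class_def h_class g_def Pi_iff)
  ultimately show ?thesis by blast
qed

lemma eval_word_gen_class:
  "set w \<subseteq> S \<times> UNIV \<Longrightarrow> eval_word (presented_group S R) (gen_class R) w = pres_class R w"
proof (induction w)
  case Nil
  then show ?case by (simp add: one_presented_group)
next
  case (Cons x w)
  interpret group "presented_group S R" by (rule group_presented_group)
  obtain a b where x: "x = (a, b)" by force
  have a: "a \<in> S" and w: "set w \<subseteq> S \<times> UNIV"
    using Cons x by auto
  have "pres_class R [(a, False)] \<otimes>\<^bsub>presented_group S R\<^esub> gen_class R a = \<one>\<^bsub>presented_group S R\<^esub>"
    using pres_rel.pr_cancel[of R "[]" a False "[]"]
    by (simp add: gen_class_def mult_presented_group one_presented_group pres_class_eq_iff)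
  moreover have "pres_class R [(a, False)] \<in> carrier (presented_group S R)"
    using a by (auto simp: carrier_presented_group)
  ultimately have "inv\<^bsub>presented_group S R\<^esub> gen_class R a = pres_class R [(a, False)]"
    using inv_equality gen_class_closed[OF a] by blast
  moreover have "pres_class R [(a, b)] \<otimes>\<^bsub>presented_group S R\<^esub> pres_class R w = pres_class R (x # w)"
    using x mult_presented_group[where u = "[(a, b)]" and v = w] by simp
  ultimately show ?case
    using Cons.IH[OF w] x by (cases b) (simp_all only: eval_word_Cons gen_class_def if_True if_False)
qed

lemma eval_relator_gen_class:
  assumes "r \<in> R" "set r \<subseteq> S \<times> UNIV"
  shows "eval_word (presented_group S R) (gen_class R) r = \<one>\<^bsub>presented_group S R\<^esub>"
proof -
  have "pres_rel R r []"
    using pres_rel.pr_relator[OF assms(1), of "[]" "[]"] by simp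
  then show ?thesis
    using assms(2) by (simp add: eval_word_gen_class one_presented_group pres_class_eq_iff)
qed

lemma presented_group_induct [consumes 1, case_names one gen inv_gen]:
  assumes x: "x \<in> carrier (presented_group S R)"
    and one: "P \<one>\<^bsub>presented_group S R\<^esub>"
    and gen: "\<And>a y. a \<in> S \<Longrightarrow> y \<in> carrier (presented_group S R) \<Longrightarrow> P y \<Longrightarrow>
      P (gen_class R a \<otimes>\<^bsub>presented_group S R\<^esub> y)"
    and inv_gen: "\<And>a y. a \<in> S \<Longrightarrow> y \<in> carrier (presented_group S R) \<Longrightarrow> P y \<Longrightarrow>
      P (inv\<^bsub>presented_group S R\<^esub> gen_class R a \<otimes>\<^bsub>presented_group S R\<^esub> y)"
  shows "P x"
proof -
  interpret group "presented_group S R" by (rule group_presented_group)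
  have gens: "gen_class R \<in> S \<rightarrow> carrier (presented_group S R)"
    by (intro funcsetI gen_class_closed)
  obtain w where w: "set w \<subseteq> S \<times> UNIV" "x = pres_class R w"
    using x by (auto simp: carrier_presented_group)
  have "P (eval_word (presented_group S R) (gen_class R) w)"
    using w(1)
  proof (induction w)
    case (Cons x w)
    obtain a b where x: "x = (a, b)" by force
    then have "a \<in> S" "set w \<subseteq> S \<times> UNIV"
      using Cons.prems by auto
    with Cons.IH have "P (eval_word (presented_group S R) (gen_class R) w)"
      "eval_word (presented_group S R) (gen_class R) w \<in> carrier (presented_group S R)"
      using eval_word_closed[OF gens] by auto
    then show ?case
      using x gen[OF \<open>a \<in> S\<close>] inv_gen[OF \<open>a \<in> S\<close>] by (cases b) simp_all
  qed (use one in simp)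
  then show ?thesis
    using w by (simp add: eval_word_gen_class)
qed

section \<open>The McCool relations\<close>

lemma inv_word_map_apfst: "inv_word (map (apfst \<phi>) w) = map (apfst \<phi>) (inv_word w)"
  by (induction w) auto

lemma comm_word_map_apfst:
  "comm_word (map (apfst \<phi>) u) (map (apfst \<phi>) v) = map (apfst \<phi>) (comm_word u v)"
  by (simp add: comm_word_def inv_word_map_apfst)

lemma PW_rels_letters: "r \<in> PW_rels n \<Longrightarrow> set r \<subseteq> pw_gens n \<times> UNIV"
  by (auto simp: PW_rels_def mccool_rels_def comm_word_def inv_word_def pw_gens_def)

lemma group_PW: "group (PW n)"
  unfolding PW_def by (rule group_presented_group)

lemma gen_class_PW_closed: "(i, j) \<in> pw_gens n \<Longrightarrow> gen_class (PW_rels n) (i, j) \<in> carrier (PW n)"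
  unfolding PW_def by (rule gen_class_closed)

definition mccool_relations :: "('b, 'c) monoid_scheme \<Rightarrow> nat \<Rightarrow> (nat \<times> nat \<Rightarrow> 'b) \<Rightarrow> bool" where
  "mccool_relations H n e \<longleftrightarrow>
     (\<forall>i j s t. (i, j) \<in> pw_gens n \<longrightarrow> (s, t) \<in> pw_gens n \<longrightarrow> {i, j} \<inter> {s, t} = {} \<longrightarrow>
        e (i, j) \<otimes>\<^bsub>H\<^esub> e (s, t) = e (s, t) \<otimes>\<^bsub>H\<^esub> e (i, j))
   \<and> (\<forall>i j k. i \<in> {1..n} \<longrightarrow> j \<in> {1..n} \<longrightarrow> k \<in> {1..n} \<longrightarrow> i \<noteq> j \<longrightarrow> j \<noteq> k \<longrightarrow> i \<noteq> k \<longrightarrow>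
        e (i, j) \<otimes>\<^bsub>H\<^esub> e (k, j) = e (k, j) \<otimes>\<^bsub>H\<^esub> e (i, j))
   \<and> (\<forall>i j k. i \<in> {1..n} \<longrightarrow> j \<in> {1..n} \<longrightarrow> k \<in> {1..n} \<longrightarrow> i \<noteq> j \<longrightarrow> j \<noteq> k \<longrightarrow> i \<noteq> k \<longrightarrow>
        e (i, j) \<otimes>\<^bsub>H\<^esub> e (k, j) \<otimes>\<^bsub>H\<^esub> e (i, k) = e (i, k) \<otimes>\<^bsub>H\<^esub> (e (i, j) \<otimes>\<^bsub>H\<^esub> e (k, j)))"

lemma mccool_rels_disjointI:
  "(i, j) \<in> pw_gens n \<Longrightarrow> (s, t) \<in> pw_gens n \<Longrightarrow> {i, j} \<inter> {s, t} = {} \<Longrightarrow>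
    comm_word [(emb (g (i, j)), True)] [(emb (g (s, t)), True)] \<in> mccool_rels n emb g"
  unfolding mccool_rels_def Let_def
  by (rule UnI1, rule UnI1, rule CollectI, rule exI[of _ i], rule exI[of _ j], rule exI[of _ s],
      rule exI[of _ t]) simp

lemma mccool_rels_common_targetI:
  "i \<in> {1..n} \<Longrightarrow> j \<in> {1..n} \<Longrightarrow> k \<in> {1..n} \<Longrightarrow> i \<noteq> j \<Longrightarrow> j \<noteq> k \<Longrightarrow> i \<noteq> k \<Longrightarrow>
    comm_word [(emb (g (i, j)), True)] [(emb (g (k, j)), True)] \<in> mccool_rels n emb g"
  unfolding mccool_rels_def Let_def
  by (rule UnI1, rule UnI2, rule CollectI, rule exI[of _ i], rule exI[of _ j], rule exI[of _ k]) simp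

lemma mccool_rels_triangleI:
  "i \<in> {1..n} \<Longrightarrow> j \<in> {1..n} \<Longrightarrow> k \<in> {1..n} \<Longrightarrow> i \<noteq> j \<Longrightarrow> j \<noteq> k \<Longrightarrow> i \<noteq> k \<Longrightarrow>
    comm_word [(emb (g (i, j)), True), (emb (g (k, j)), True)] [(emb (g (i, k)), True)]
      \<in> mccool_rels n emb g"
  unfolding mccool_rels_def Let_def
  by (rule UnI2, rule CollectI, rule exI[of _ i], rule exI[of _ j], rule exI[of _ k]) simp

lemma mccool_relsE:
  assumes "r \<in> mccool_rels n emb g"
  obtains (disjoint) i j s t where "(i, j) \<in> pw_gens n" "(s, t) \<in> pw_gens n" "{i, j} \<inter> {s, t} = {}"
      "r = comm_word [(emb (g (i, j)), True)] [(emb (g (s, t)), True)]"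
  | (common_target) i j k where "i \<in> {1..n}" "j \<in> {1..n}" "k \<in> {1..n}" "i \<noteq> j" "j \<noteq> k" "i \<noteq> k"
      "r = comm_word [(emb (g (i, j)), True)] [(emb (g (k, j)), True)]"
  | (triangle) i j k where "i \<in> {1..n}" "j \<in> {1..n}" "k \<in> {1..n}" "i \<noteq> j" "j \<noteq> k" "i \<noteq> k"
      "r = comm_word [(emb (g (i, j)), True), (emb (g (k, j)), True)] [(emb (g (i, k)), True)]"
  using assms unfolding mccool_rels_def Let_def by auto

lemma PW_rels_disjointI:
  "(i, j) \<in> pw_gens n \<Longrightarrow> (s, t) \<in> pw_gens n \<Longrightarrow> {i, j} \<inter> {s, t} = {} \<Longrightarrow>
    comm_word [((i, j), True)] [((s, t), True)] \<in> PW_rels n"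
  using mccool_rels_disjointI[of i j n s t id id] by (simp add: PW_rels_def)

lemma PW_rels_common_targetI:
  "i \<in> {1..n} \<Longrightarrow> j \<in> {1..n} \<Longrightarrow> k \<in> {1..n} \<Longrightarrow> i \<noteq> j \<Longrightarrow> j \<noteq> k \<Longrightarrow> i \<noteq> k \<Longrightarrow>
    comm_word [((i, j), True)] [((k, j), True)] \<in> PW_rels n"
  using mccool_rels_common_targetI[of i n j k id id] by (simp add: PW_rels_def)

lemma PW_rels_triangleI:
  "i \<in> {1..n} \<Longrightarrow> j \<in> {1..n} \<Longrightarrow> k \<in> {1..n} \<Longrightarrow> i \<noteq> j \<Longrightarrow> j \<noteq> k \<Longrightarrow> i \<noteq> k \<Longrightarrow>
    comm_word [((i, j), True), ((k, j), True)] [((i, k), True)] \<in> PW_rels n"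
  using mccool_rels_triangleI[of i n j k id id] by (simp add: PW_rels_def)

lemma PW_relsE:
  assumes "r \<in> PW_rels n"
  obtains (disjoint) i j s t where "(i, j) \<in> pw_gens n" "(s, t) \<in> pw_gens n" "{i, j} \<inter> {s, t} = {}"
      "r = comm_word [((i, j), True)] [((s, t), True)]"
  | (common_target) i j k where "i \<in> {1..n}" "j \<in> {1..n}" "k \<in> {1..n}" "i \<noteq> j" "j \<noteq> k" "i \<noteq> k"
      "r = comm_word [((i, j), True)] [((k, j), True)]"
  | (triangle) i j k where "i \<in> {1..n}" "j \<in> {1..n}" "k \<in> {1..n}" "i \<noteq> j" "j \<noteq> k" "i \<noteq> k"
      "r = comm_word [((i, j), True), ((k, j), True)] [((i, k), True)]"
  using assms unfolding PW_rels_def by (cases rule: mccool_relsE) auto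

lemma mccool_rels_eq_image: "mccool_rels n emb g = map (apfst (emb \<circ> g)) ` PW_rels n"
proof (intro equalityI subsetI)
  fix r
  assume "r \<in> mccool_rels n emb g"
  then show "r \<in> map (apfst (emb \<circ> g)) ` PW_rels n"
  proof (cases rule: mccool_relsE)
    case (disjoint i j s t)
    show ?thesis
      by (rule image_eqI[OF _ PW_rels_disjointI[OF disjoint(1-3)]])
        (simp add: disjoint(4) comm_word_map_apfst[symmetric])
  next
    case (common_target i j k)
    show ?thesis
      by (rule image_eqI[OF _ PW_rels_common_targetI[OF common_target(1-6)]])
        (simp add: common_target(7) comm_word_map_apfst[symmetric])
  next
    case (triangle i j k)
    show ?thesis
      by (rule image_eqI[OF _ PW_rels_triangleI[OF triangle(1-6)]])
        (simp add: triangle(7) comm_word_map_apfst[symmetric])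
  qed
next
  fix r
  assume "r \<in> map (apfst (emb \<circ> g)) ` PW_rels n"
  then obtain r' where r: "r = map (apfst (emb \<circ> g)) r'" "r' \<in> PW_rels n"
    by blast
  from r(2) show "r \<in> mccool_rels n emb g"
    by (cases rule: PW_relsE)
      (simp_all add: r(1) comm_word_map_apfst[symmetric] mccool_rels_disjointI
        mccool_rels_common_targetI mccool_rels_triangleI)
qed

context group
begin

lemma eval_comm_word_letters_eq_one_iff:
  assumes "f \<in> S \<rightarrow> carrier G" "a \<in> S" "b \<in> S"
  shows "eval_word G f (comm_word [(a, True)] [(b, True)]) = \<one> \<longleftrightarrow> f a \<otimes> f b = f b \<otimes> f a"
  using eval_comm_word_eq_one_iff[OF assms(1), of "[(a, True)]" "[(b, True)]"] assms
  by (auto simp: Pi_iff)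

lemma eval_comm_word_triangle_eq_one_iff:
  assumes "f \<in> S \<rightarrow> carrier G" "a \<in> S" "b \<in> S" "c \<in> S"
  shows "eval_word G f (comm_word [(a, True), (b, True)] [(c, True)]) = \<one> \<longleftrightarrow>
    f a \<otimes> f b \<otimes> f c = f c \<otimes> (f a \<otimes> f b)"
  using eval_comm_word_eq_one_iff[OF assms(1), of "[(a, True), (b, True)]" "[(c, True)]"] assms
  by (auto simp: Pi_iff m_assoc)

lemma mccool_relations_if_eval_PW_rels:
  assumes e: "e \<in> pw_gens n \<rightarrow> carrier G" and rels: "\<And>r. r \<in> PW_rels n \<Longrightarrow> eval_word G e r = \<one>"
  shows "mccool_relations G n e"
  unfolding mccool_relations_def
proof (intro conjI allI impI)
  fix i j s t
  assume ij: "(i, j) \<in> pw_gens n" and st: "(s, t) \<in> pw_gens n" and disj: "{i, j} \<inter> {s, t} = {}"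
  show "e (i, j) \<otimes> e (s, t) = e (s, t) \<otimes> e (i, j)"
    using rels[OF PW_rels_disjointI[OF ij st disj]] eval_comm_word_letters_eq_one_iff[OF e ij st]
    by simp
next
  fix i j k
  assume ijk: "i \<in> {1..n}" "j \<in> {1..n}" "k \<in> {1..n}" "i \<noteq> j" "j \<noteq> k" "i \<noteq> k"
  then have gens: "(i, j) \<in> pw_gens n" "(k, j) \<in> pw_gens n" "(i, k) \<in> pw_gens n"
    by (auto simp: pw_gens_def)
  show "e (i, j) \<otimes> e (k, j) = e (k, j) \<otimes> e (i, j)"
    using rels[OF PW_rels_common_targetI[OF ijk]] eval_comm_word_letters_eq_one_iff[OF e gens(1,2)]
    by simp
  show "e (i, j) \<otimes> e (k, j) \<otimes> e (i, k) = e (i, k) \<otimes> (e (i, j) \<otimes> e (k, j))"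
    using rels[OF PW_rels_triangleI[OF ijk]] eval_comm_word_triangle_eq_one_iff[OF e gens] by simp
qed

lemma eval_PW_rels_if_mccool_relations:
  assumes e: "e \<in> pw_gens n \<rightarrow> carrier G" and rels: "mccool_relations G n e"
    and r: "r \<in> PW_rels n"
  shows "eval_word G e r = \<one>"
  using r
proof (cases rule: PW_relsE)
  case (disjoint i j s t)
  then show ?thesis
    using rels eval_comm_word_letters_eq_one_iff[OF e] by (simp add: mccool_relations_def)
next
  case (common_target i j k)
  then have "(i, j) \<in> pw_gens n" "(k, j) \<in> pw_gens n"
    by (auto simp: pw_gens_def)
  with common_target show ?thesis
    using rels eval_comm_word_letters_eq_one_iff[OF e] by (simp add: mccool_relations_def)
next
  case (triangle i j k)
  then have "(i, j) \<in> pw_gens n" "(k, j) \<in> pw_gens n" "(i, k) \<in> pw_gens n"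
    by (auto simp: pw_gens_def)
  with triangle show ?thesis
    using rels eval_comm_word_triangle_eq_one_iff[OF e] by (simp add: mccool_relations_def)
qed

end

section \<open>The semidirect product\<close>

lemma group_SD: "group (SD n)"
  unfolding SD_def by (rule group_presented_group)

lemma x_el_closed: "k \<in> {1..n} \<Longrightarrow> x_el n k \<in> carrier (SD n)"
  unfolding x_el_def SD_def by (rule gen_class_closed) (auto simp: SD_gens_def)

lemma xi_el_closed: "(i, j) \<in> pw_gens n \<Longrightarrow> xi_el n i j \<in> carrier (SD n)"
  unfolding xi_el_def SD_def by (rule gen_class_closed) (auto simp: SD_gens_def)

lemma set_map_apfst_subset:
  "set w \<subseteq> A \<times> UNIV \<Longrightarrow> \<phi> ` A \<subseteq> B \<Longrightarrow> set (map (apfst \<phi>) w) \<subseteq> B \<times> UNIV"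
  by (induction w) auto

lemma SD_rels_letters:
  assumes r: "r \<in> SD_rels n"
  shows "set r \<subseteq> SD_gens n \<times> UNIV"
proof -
  have Xi: "(\<lambda>(i, j). Xi i j) ` pw_gens n \<subseteq> SD_gens n"
    by (auto simp: SD_gens_def)
  show ?thesis
  proof (cases "r \<in> mccool_rels n id (\<lambda>(i, j). Xi i j)")
    case True
    then obtain r' where "r' \<in> PW_rels n" "r = map (apfst (\<lambda>(i, j). Xi i j)) r'"
      by (auto simp: mccool_rels_eq_image)
    then show ?thesis
      using set_map_apfst_subset[OF PW_rels_letters Xi] by simp
  next
    case False
    then show ?thesis
      using r by (auto simp: SD_rels_def SD_gens_def pw_gens_def)
  qed
qed

lemma eval_SD_rels:
  "r \<in> SD_rels n \<Longrightarrow> eval_word (SD n) (gen_class (SD_rels n)) r = \<one>\<^bsub>SD n\<^esub>"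
  unfolding SD_def by (rule eval_relator_gen_class[OF _ SD_rels_letters])

lemma mccool_relations_SD: "mccool_relations (SD n) n (\<lambda>(i, j). xi_el n i j)"
proof -
  interpret group "SD n" by (rule group_SD)
  have "eval_word (SD n) (\<lambda>(i, j). xi_el n i j) r = \<one>\<^bsub>SD n\<^esub>" if "r \<in> PW_rels n" for r
  proof -
    have "map (apfst (\<lambda>(i, j). Xi i j)) r \<in> SD_rels n"
      using that mccool_rels_eq_image[of n id "\<lambda>(i, j). Xi i j"] by (auto simp: SD_rels_def)
    from eval_SD_rels[OF this] show ?thesis
      by (simp add: eval_word_map_letters comp_def xi_el_def case_prod_beta')
  qed
  moreover have "(\<lambda>(i, j). xi_el n i j) \<in> pw_gens n \<rightarrow> carrier (SD n)"
    using xi_el_closed by auto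
  ultimately show ?thesis
    using mccool_relations_if_eval_PW_rels by blast
qed

lemma x_xi_commute:
  assumes ij: "(i, j) \<in> pw_gens n" and k: "k \<in> {1..n}" "k \<noteq> i"
  shows "x_el n k \<otimes>\<^bsub>SD n\<^esub> xi_el n i j = xi_el n i j \<otimes>\<^bsub>SD n\<^esub> x_el n k"
proof -
  interpret group "SD n" by (rule group_SD)
  have "[(Xi i j, False), (X k, True), (Xi i j, True), (X k, False)] \<in> SD_rels n"
    using ij k by (auto simp: SD_rels_def)
  from eval_SD_rels[OF this]
  have "inv\<^bsub>SD n\<^esub> xi_el n i j \<otimes>\<^bsub>SD n\<^esub> (x_el n k \<otimes>\<^bsub>SD n\<^esub>
      (xi_el n i j \<otimes>\<^bsub>SD n\<^esub> inv\<^bsub>SD n\<^esub> x_el n k)) = \<one>\<^bsub>SD n\<^esub>"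
    using ij k x_el_closed xi_el_closed by (simp add: x_el_def xi_el_def)
  then show ?thesis
    using ij k x_el_closed xi_el_closed by (intro mult_eq_mult_if_relator) auto
qed

lemma x_xi_conj:
  assumes ij: "(i, j) \<in> pw_gens n"
  shows "x_el n i \<otimes>\<^bsub>SD n\<^esub> xi_el n i j
    = xi_el n i j \<otimes>\<^bsub>SD n\<^esub> (x_el n j \<otimes>\<^bsub>SD n\<^esub> x_el n i \<otimes>\<^bsub>SD n\<^esub> inv\<^bsub>SD n\<^esub> x_el n j)"
proof -
  interpret group "SD n" by (rule group_SD)
  have x: "x_el n i \<in> carrier (SD n)" "x_el n j \<in> carrier (SD n)"
    using ij by (auto simp: pw_gens_def intro: x_el_closed)
  have "[(Xi i j, False), (X i, True), (Xi i j, True), (X j, True), (X i, False), (X j, False)]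
      \<in> SD_rels n"
    using ij by (auto simp: SD_rels_def)
  from eval_SD_rels[OF this]
  have "inv\<^bsub>SD n\<^esub> xi_el n i j \<otimes>\<^bsub>SD n\<^esub> (x_el n i \<otimes>\<^bsub>SD n\<^esub> (xi_el n i j \<otimes>\<^bsub>SD n\<^esub>
      inv\<^bsub>SD n\<^esub> (x_el n j \<otimes>\<^bsub>SD n\<^esub> x_el n i \<otimes>\<^bsub>SD n\<^esub> inv\<^bsub>SD n\<^esub> x_el n j))) = \<one>\<^bsub>SD n\<^esub>"
    using ij x xi_el_closed by (simp add: x_el_def xi_el_def inv_mult_group m_assoc)
  then show ?thesis
    using ij x xi_el_closed by (intro mult_eq_mult_if_relator) auto
qed

definition kill_x :: "nat \<Rightarrow> sgen \<Rightarrow> (nat \<times> nat) word set" where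
  "kill_x n a = (case a of X k \<Rightarrow> \<one>\<^bsub>PW n\<^esub> | Xi i j \<Rightarrow> gen_class (PW_rels n) (i, j))"

lemma SD_retraction:
  obtains \<rho> where "\<rho> \<in> hom (SD n) (PW n)" "\<And>k. k \<in> {1..n} \<Longrightarrow> \<rho> (x_el n k) = \<one>\<^bsub>PW n\<^esub>"
    "\<And>i j. (i, j) \<in> pw_gens n \<Longrightarrow> \<rho> (xi_el n i j) = gen_class (PW_rels n) (i, j)"
proof -
  interpret PW: group "PW n" by (rule group_PW)
  have kill_x: "kill_x n \<in> SD_gens n \<rightarrow> carrier (PW n)"
    by (auto simp: kill_x_def SD_gens_def gen_class_PW_closed)
  have rels: "eval_word (PW n) (kill_x n) r = \<one>\<^bsub>PW n\<^esub>" if r: "r \<in> SD_rels n" for r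
  proof (cases "r \<in> mccool_rels n id (\<lambda>(i, j). Xi i j)")
    case True
    then obtain r' where r': "r' \<in> PW_rels n" "r = map (apfst (\<lambda>(i, j). Xi i j)) r'"
      by (auto simp: mccool_rels_eq_image)
    then have "eval_word (PW n) (kill_x n) r = eval_word (PW n) (gen_class (PW_rels n)) r'"
      by (simp add: eval_word_map_letters comp_def kill_x_def case_prod_beta')
    also have "\<dots> = \<one>\<^bsub>PW n\<^esub>"
      using eval_relator_gen_class[OF r'(1) PW_rels_letters[OF r'(1)]] by (simp add: PW_def)
    finally show ?thesis .
  next
    case False
    then obtain i j k where "(i, j) \<in> pw_gens n"
      "r = [(Xi i j, False), (X k, True), (Xi i j, True), (X k, False)]
        \<or> r = [(Xi i j, False), (X i, True), (Xi i j, True), (X j, True), (X i, False), (X j, False)]"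
      using r unfolding SD_rels_def by blast
    then show ?thesis
      by (auto simp: kill_x_def gen_class_PW_closed)
  qed
  have "\<exists>\<rho> \<in> hom (SD n) (PW n). \<forall>a\<in>SD_gens n. \<rho> (gen_class (SD_rels n) a) = kill_x n a"
    unfolding SD_def by (rule presented_group_hom[OF PW.is_group kill_x SD_rels_letters rels])
  then obtain \<rho> where \<rho>: "\<rho> \<in> hom (SD n) (PW n)"
    and gens: "\<forall>a\<in>SD_gens n. \<rho> (gen_class (SD_rels n) a) = kill_x n a"
    by blast
  have "\<rho> (x_el n k) = \<one>\<^bsub>PW n\<^esub>" if "k \<in> {1..n}" for k
    using gens that by (simp add: x_el_def kill_x_def SD_gens_def)
  moreover have "\<rho> (xi_el n i j) = gen_class (PW_rels n) (i, j)" if "(i, j) \<in> pw_gens n" for i j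
    using gens that by (simp add: xi_el_def kill_x_def SD_gens_def)
  ultimately show ?thesis
    using \<rho> that by blast
qed

lemma xi_el_commute_disjoint:
  "(i, j) \<in> pw_gens n \<Longrightarrow> (s, t) \<in> pw_gens n \<Longrightarrow> {i, j} \<inter> {s, t} = {} \<Longrightarrow>
    xi_el n i j \<otimes>\<^bsub>SD n\<^esub> xi_el n s t = xi_el n s t \<otimes>\<^bsub>SD n\<^esub> xi_el n i j"
  using mccool_relations_SD[of n] by (auto simp: mccool_relations_def)

lemma xi_el_commute_common_target:
  "i \<in> {1..n} \<Longrightarrow> j \<in> {1..n} \<Longrightarrow> k \<in> {1..n} \<Longrightarrow> i \<noteq> j \<Longrightarrow> j \<noteq> k \<Longrightarrow> i \<noteq> k \<Longrightarrow>
    xi_el n i j \<otimes>\<^bsub>SD n\<^esub> xi_el n k j = xi_el n k j \<otimes>\<^bsub>SD n\<^esub> xi_el n i j"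
  using mccool_relations_SD[of n] by (auto simp: mccool_relations_def)

lemma xi_el_triangle:
  "i \<in> {1..n} \<Longrightarrow> j \<in> {1..n} \<Longrightarrow> k \<in> {1..n} \<Longrightarrow> i \<noteq> j \<Longrightarrow> j \<noteq> k \<Longrightarrow> i \<noteq> k \<Longrightarrow>
    xi_el n i j \<otimes>\<^bsub>SD n\<^esub> xi_el n k j \<otimes>\<^bsub>SD n\<^esub> xi_el n i k
      = xi_el n i k \<otimes>\<^bsub>SD n\<^esub> (xi_el n i j \<otimes>\<^bsub>SD n\<^esub> xi_el n k j)"
  using mccool_relations_SD[of n] by (auto simp: mccool_relations_def)

context
  fixes n a b :: nat
  assumes ab: "(a, b) \<in> pw_gens n"
begin

interpretation SD: group "SD n" by (rule group_SD)

private lemma carrier_ab: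
  "xi_el n a b \<in> carrier (SD n)" "x_el n a \<in> carrier (SD n)" "x_el n b \<in> carrier (SD n)"
  using ab by (auto simp: pw_gens_def intro: xi_el_closed x_el_closed)

lemma inv_x_xi_commute:
  assumes "k \<in> {1..n}" "k \<noteq> a"
  shows "inv\<^bsub>SD n\<^esub> x_el n k \<otimes>\<^bsub>SD n\<^esub> xi_el n a b = xi_el n a b \<otimes>\<^bsub>SD n\<^esub> inv\<^bsub>SD n\<^esub> x_el n k"
  using x_xi_commute[OF ab assms] assms carrier_ab x_el_closed by (intro SD.inv_mult_eq_mult_inv) auto

lemma inv_x_xi_conj:
  "inv\<^bsub>SD n\<^esub> x_el n a \<otimes>\<^bsub>SD n\<^esub> xi_el n a b
    = xi_el n a b \<otimes>\<^bsub>SD n\<^esub> (x_el n b \<otimes>\<^bsub>SD n\<^esub> (inv\<^bsub>SD n\<^esub> x_el n a \<otimes>\<^bsub>SD n\<^esub> inv\<^bsub>SD n\<^esub> x_el n b))"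
proof -
  have "inv\<^bsub>SD n\<^esub> x_el n a \<otimes>\<^bsub>SD n\<^esub> xi_el n a b
      = xi_el n a b \<otimes>\<^bsub>SD n\<^esub> inv\<^bsub>SD n\<^esub> (x_el n b \<otimes>\<^bsub>SD n\<^esub> x_el n a \<otimes>\<^bsub>SD n\<^esub> inv\<^bsub>SD n\<^esub> x_el n b)"
    using x_xi_conj[OF ab] carrier_ab by (intro SD.inv_mult_eq_mult_inv) auto
  then show ?thesis
    using carrier_ab by (simp add: SD.inv_mult_group SD.m_assoc)
qed

lemma x_xi_commute_assoc:
  "k \<in> {1..n} \<Longrightarrow> k \<noteq> a \<Longrightarrow> y \<in> carrier (SD n) \<Longrightarrow>
    x_el n k \<otimes>\<^bsub>SD n\<^esub> (xi_el n a b \<otimes>\<^bsub>SD n\<^esub> y) = xi_el n a b \<otimes>\<^bsub>SD n\<^esub> (x_el n k \<otimes>\<^bsub>SD n\<^esub> y)"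
  using x_xi_commute[OF ab] carrier_ab x_el_closed by (simp add: SD.m_assoc[symmetric])

lemma inv_x_xi_commute_assoc:
  "k \<in> {1..n} \<Longrightarrow> k \<noteq> a \<Longrightarrow> y \<in> carrier (SD n) \<Longrightarrow>
    inv\<^bsub>SD n\<^esub> x_el n k \<otimes>\<^bsub>SD n\<^esub> (xi_el n a b \<otimes>\<^bsub>SD n\<^esub> y)
      = xi_el n a b \<otimes>\<^bsub>SD n\<^esub> (inv\<^bsub>SD n\<^esub> x_el n k \<otimes>\<^bsub>SD n\<^esub> y)"
  using inv_x_xi_commute carrier_ab x_el_closed by (simp add: SD.m_assoc[symmetric])

lemma x_xi_conj_assoc:
  "y \<in> carrier (SD n) \<Longrightarrow> x_el n a \<otimes>\<^bsub>SD n\<^esub> (xi_el n a b \<otimes>\<^bsub>SD n\<^esub> y)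
    = xi_el n a b \<otimes>\<^bsub>SD n\<^esub> (x_el n b \<otimes>\<^bsub>SD n\<^esub> (x_el n a \<otimes>\<^bsub>SD n\<^esub> (inv\<^bsub>SD n\<^esub> x_el n b \<otimes>\<^bsub>SD n\<^esub> y)))"
  using x_xi_conj[OF ab] carrier_ab by (simp add: SD.m_assoc[symmetric])

lemma inv_x_xi_conj_assoc:
  "y \<in> carrier (SD n) \<Longrightarrow> inv\<^bsub>SD n\<^esub> x_el n a \<otimes>\<^bsub>SD n\<^esub> (xi_el n a b \<otimes>\<^bsub>SD n\<^esub> y)
    = xi_el n a b \<otimes>\<^bsub>SD n\<^esub> (x_el n b \<otimes>\<^bsub>SD n\<^esub> (inv\<^bsub>SD n\<^esub> x_el n a \<otimes>\<^bsub>SD n\<^esub> (inv\<^bsub>SD n\<^esub> x_el n b \<otimes>\<^bsub>SD n\<^esub> y)))"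
  using inv_x_xi_conj carrier_ab by (simp add: SD.m_assoc[symmetric])

end

(* Oriented so as to move every xi to the left of the x's: with them simp brings the group elements
   occurring in products of the matrices C(xi_ij) to a normal form. *)
lemmas x_past_xi = x_xi_commute x_xi_commute_assoc inv_x_xi_commute inv_x_xi_commute_assoc
  x_xi_conj x_xi_conj_assoc inv_x_xi_conj inv_x_xi_conj_assoc

section \<open>The group algebra\<close>

definition supp :: "('g \<Rightarrow> complex) \<Rightarrow> 'g set" where
  "supp f = {x. f x \<noteq> 0}"

lemma in_group_algebra_iff: "in_group_algebra G f \<longleftrightarrow> finite (supp f) \<and> supp f \<subseteq> carrier G"
  by (simp add: in_group_algebra_def supp_def)

lemma delta_apply: "delta a z = (if z = a then 1 else 0)"
  by (simp add: delta_def)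

lemma supp_delta [simp]: "supp (delta a) = {a}"
  by (auto simp: supp_def delta_def)

lemma supp_zero [simp]: "supp (\<lambda>_. 0) = {}"
  by (simp add: supp_def)

lemma supp_add_subset: "supp (\<lambda>z. f z + g z) \<subseteq> supp f \<union> supp g"
  by (auto simp: supp_def)

lemma supp_diff_subset: "supp (\<lambda>z. f z - g z) \<subseteq> supp f \<union> supp g"
  by (auto simp: supp_def)

lemma supp_conv_subset: "supp (conv G f g) \<subseteq> (\<lambda>(x, y). x \<otimes>\<^bsub>G\<^esub> y) ` (supp f \<times> supp g)"
proof
  fix z
  assume z: "z \<in> supp (conv G f g)"
  show "z \<in> (\<lambda>(x, y). x \<otimes>\<^bsub>G\<^esub> y) ` (supp f \<times> supp g)"
  proof (rule ccontr)
    assume "z \<notin> (\<lambda>(x, y). x \<otimes>\<^bsub>G\<^esub> y) ` (supp f \<times> supp g)"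
    then have "conv G f g z = 0"
      unfolding conv_def by (intro sum.neutral) (force simp: supp_def)
    then show False
      using z by (simp add: supp_def)
  qed
qed

lemma finite_supp_add [simp]: "finite (supp f) \<Longrightarrow> finite (supp g) \<Longrightarrow> finite (supp (\<lambda>z. f z + g z))"
  by (rule finite_subset[OF supp_add_subset]) simp

lemma finite_supp_diff [simp]: "finite (supp f) \<Longrightarrow> finite (supp g) \<Longrightarrow> finite (supp (\<lambda>z. f z - g z))"
  by (rule finite_subset[OF supp_diff_subset]) simp

lemma finite_supp_conv [simp]: "finite (supp f) \<Longrightarrow> finite (supp g) \<Longrightarrow> finite (supp (conv G f g))"
  by (rule finite_subset[OF supp_conv_subset]) simp

lemma finite_supp_sum:
  "finite K \<Longrightarrow> (\<And>k. k \<in> K \<Longrightarrow> finite (supp (F k))) \<Longrightarrow> finite (supp (\<lambda>z. \<Sum>k\<in>K. F k z))"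
  by (induction K rule: finite_induct) simp_all

lemma conv_eq_sum:
  assumes "finite A" "finite B" "supp f \<subseteq> A" "supp g \<subseteq> B"
  shows "conv G f g z = (\<Sum>x\<in>A. \<Sum>y\<in>B. f x * g y * delta (x \<otimes>\<^bsub>G\<^esub> y) z)"
proof -
  have "conv G f g z = (\<Sum>p\<in>supp f \<times> supp g.
          if fst p \<otimes>\<^bsub>G\<^esub> snd p = z then f (fst p) * g (snd p) else 0)"
    by (simp add: conv_def supp_def)
  also have "\<dots> = (\<Sum>p\<in>A \<times> B. if fst p \<otimes>\<^bsub>G\<^esub> snd p = z then f (fst p) * g (snd p) else 0)"
    using assms by (intro sum.mono_neutral_left) (auto simp: supp_def)
  also have "\<dots> = (\<Sum>x\<in>A. \<Sum>y\<in>B. f x * g y * delta (x \<otimes>\<^bsub>G\<^esub> y) z)"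
    unfolding sum.cartesian_product by (intro sum.cong) (auto simp: delta_def)
  finally show ?thesis .
qed

lemma in_group_algebra_delta: "a \<in> carrier G \<Longrightarrow> in_group_algebra G (delta a)"
  by (simp add: in_group_algebra_iff)

lemma in_group_algebra_zero: "in_group_algebra G (\<lambda>_. 0)"
  by (simp add: in_group_algebra_iff)

lemma in_group_algebra_add:
  "in_group_algebra G f \<Longrightarrow> in_group_algebra G g \<Longrightarrow> in_group_algebra G (\<lambda>z. f z + g z)"
  using supp_add_subset[of f g] by (auto simp: in_group_algebra_iff)

lemma in_group_algebra_diff:
  "in_group_algebra G f \<Longrightarrow> in_group_algebra G g \<Longrightarrow> in_group_algebra G (\<lambda>z. f z - g z)"
  using supp_diff_subset[of f g] by (auto simp: in_group_algebra_iff)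

lemma in_group_algebra_sum:
  "finite K \<Longrightarrow> (\<And>k. k \<in> K \<Longrightarrow> in_group_algebra G (F k)) \<Longrightarrow>
    in_group_algebra G (\<lambda>z. \<Sum>k\<in>K. F k z)"
  by (induction K rule: finite_induct) (auto intro: in_group_algebra_zero in_group_algebra_add)

lemma in_group_algebra_conv:
  assumes G: "monoid G" and f: "in_group_algebra G f" and g: "in_group_algebra G g"
  shows "in_group_algebra G (conv G f g)"
proof -
  have "(\<lambda>(x, y). x \<otimes>\<^bsub>G\<^esub> y) ` (supp f \<times> supp g) \<subseteq> carrier G"
    using f g monoid.m_closed[OF G] by (auto simp: in_group_algebra_iff)
  then show ?thesis
    using f g supp_conv_subset[of G f g] by (auto simp: in_group_algebra_iff)
qed

lemma conv_zero_left [simp]: "conv G (\<lambda>_. 0) g = (\<lambda>_. 0)"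
  by (simp add: conv_def)

lemma conv_zero_right [simp]: "conv G f (\<lambda>_. 0) = (\<lambda>_. 0)"
  by (simp add: conv_def)

lemma conv_delta_delta: "conv G (delta a) (delta b) = delta (a \<otimes>\<^bsub>G\<^esub> b)"
proof
  fix z
  show "conv G (delta a) (delta b) z = delta (a \<otimes>\<^bsub>G\<^esub> b) z"
    by (simp add: conv_eq_sum[of "{a}" "{b}"]) (simp add: delta_def)
qed

lemma conv_add_left:
  assumes "finite (supp f1)" "finite (supp f2)" "finite (supp g)"
  shows "conv G (\<lambda>z. f1 z + f2 z) g = (\<lambda>z. conv G f1 g z + conv G f2 g z)"
proof
  fix z
  have "supp (\<lambda>z. f1 z + f2 z) \<subseteq> supp f1 \<union> supp f2"
    by (rule supp_add_subset)
  then show "conv G (\<lambda>z. f1 z + f2 z) g z = conv G f1 g z + conv G f2 g z"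
    using assms by (simp add: conv_eq_sum[of "supp f1 \<union> supp f2" "supp g"] sum.distrib[symmetric]
        algebra_simps)
qed

lemma conv_add_right:
  assumes "finite (supp f)" "finite (supp g1)" "finite (supp g2)"
  shows "conv G f (\<lambda>z. g1 z + g2 z) = (\<lambda>z. conv G f g1 z + conv G f g2 z)"
proof
  fix z
  have "supp (\<lambda>z. g1 z + g2 z) \<subseteq> supp g1 \<union> supp g2"
    by (rule supp_add_subset)
  then show "conv G f (\<lambda>z. g1 z + g2 z) z = conv G f g1 z + conv G f g2 z"
    using assms by (simp add: conv_eq_sum[of "supp f" "supp g1 \<union> supp g2"] sum.distrib[symmetric]
        algebra_simps)
qed

lemma conv_diff_left:
  assumes "finite (supp f1)" "finite (supp f2)" "finite (supp g)"
  shows "conv G (\<lambda>z. f1 z - f2 z) g = (\<lambda>z. conv G f1 g z - conv G f2 g z)"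
proof
  fix z
  have "supp (\<lambda>z. f1 z - f2 z) \<subseteq> supp f1 \<union> supp f2"
    by (rule supp_diff_subset)
  then show "conv G (\<lambda>z. f1 z - f2 z) g z = conv G f1 g z - conv G f2 g z"
    using assms by (simp add: conv_eq_sum[of "supp f1 \<union> supp f2" "supp g"] sum_subtractf[symmetric]
        algebra_simps)
qed

lemma conv_diff_right:
  assumes "finite (supp f)" "finite (supp g1)" "finite (supp g2)"
  shows "conv G f (\<lambda>z. g1 z - g2 z) = (\<lambda>z. conv G f g1 z - conv G f g2 z)"
proof
  fix z
  have "supp (\<lambda>z. g1 z - g2 z) \<subseteq> supp g1 \<union> supp g2"
    by (rule supp_diff_subset)
  then show "conv G f (\<lambda>z. g1 z - g2 z) z = conv G f g1 z - conv G f g2 z"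
    using assms by (simp add: conv_eq_sum[of "supp f" "supp g1 \<union> supp g2"] sum_subtractf[symmetric]
        algebra_simps)
qed

lemma conv_sum_left:
  assumes "finite K" "\<And>k. k \<in> K \<Longrightarrow> finite (supp (F k))" "finite (supp g)"
  shows "conv G (\<lambda>z. \<Sum>k\<in>K. F k z) g = (\<lambda>z. \<Sum>k\<in>K. conv G (F k) g z)"
  using assms
  by (induction K rule: finite_induct) (simp_all add: conv_add_left finite_supp_sum)

lemma conv_sum_right:
  assumes "finite K" "\<And>k. k \<in> K \<Longrightarrow> finite (supp (F k))" "finite (supp f)"
  shows "conv G f (\<lambda>z. \<Sum>k\<in>K. F k z) = (\<lambda>z. \<Sum>k\<in>K. conv G f (F k) z)"
  using assms
  by (induction K rule: finite_induct) (simp_all add: conv_add_right finite_supp_sum)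

lemma sum_mult_delta: "finite A \<Longrightarrow> (\<Sum>y\<in>A. f y * delta y z) = (if z \<in> A then f z else 0)"
  by (simp add: delta_def if_distrib[of "times _"] cong: if_cong)

lemma conv_delta_one_left:
  assumes G: "monoid G" and f: "in_group_algebra G f"
  shows "conv G (delta \<one>\<^bsub>G\<^esub>) f = f"
proof
  fix z
  have fin: "finite (supp f)" and sub: "supp f \<subseteq> carrier G"
    using f by (auto simp: in_group_algebra_iff)
  have "conv G (delta \<one>\<^bsub>G\<^esub>) f z
      = (\<Sum>x\<in>{\<one>\<^bsub>G\<^esub>}. \<Sum>y\<in>supp f. delta \<one>\<^bsub>G\<^esub> x * f y * delta (x \<otimes>\<^bsub>G\<^esub> y) z)"
    using fin by (intro conv_eq_sum) auto
  also have "\<dots> = (\<Sum>y\<in>supp f. f y * delta y z)"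
  proof -
    have "\<one>\<^bsub>G\<^esub> \<otimes>\<^bsub>G\<^esub> y = y" if "y \<in> supp f" for y
      using that sub monoid.l_one[OF G] by blast
    then show ?thesis
      by (simp add: delta_apply cong: sum.cong)
  qed
  also have "\<dots> = f z"
    using fin by (simp add: sum_mult_delta supp_def)
  finally show "conv G (delta \<one>\<^bsub>G\<^esub>) f z = f z" .
qed

lemma conv_delta_one_right:
  assumes G: "monoid G" and f: "in_group_algebra G f"
  shows "conv G f (delta \<one>\<^bsub>G\<^esub>) = f"
proof
  fix z
  have fin: "finite (supp f)" and sub: "supp f \<subseteq> carrier G"
    using f by (auto simp: in_group_algebra_iff)
  have "conv G f (delta \<one>\<^bsub>G\<^esub>) z
      = (\<Sum>y\<in>supp f. \<Sum>x\<in>{\<one>\<^bsub>G\<^esub>}. f y * delta \<one>\<^bsub>G\<^esub> x * delta (y \<otimes>\<^bsub>G\<^esub> x) z)"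
    using fin by (intro conv_eq_sum) auto
  also have "\<dots> = (\<Sum>y\<in>supp f. f y * delta y z)"
  proof -
    have "y \<otimes>\<^bsub>G\<^esub> \<one>\<^bsub>G\<^esub> = y" if "y \<in> supp f" for y
      using that sub monoid.r_one[OF G] by blast
    then show ?thesis
      by (simp add: delta_apply cong: sum.cong)
  qed
  also have "\<dots> = f z"
    using fin by (simp add: sum_mult_delta supp_def)
  finally show "conv G f (delta \<one>\<^bsub>G\<^esub>) z = f z" .
qed

lemma sum_delta_mult:
  assumes "finite W" "t \<in> W"
  shows "(\<Sum>w\<in>W. delta t w * u w) = u t"
  using assms by (simp add: delta_def if_distrib[of "\<lambda>c. c * _"] cong: if_cong)

lemma sum_sum_delta_mult:
  assumes "finite W" "\<And>a b. a \<in> A \<Longrightarrow> b \<in> B \<Longrightarrow> m a b \<in> W"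
  shows "(\<Sum>w\<in>W. (\<Sum>a\<in>A. \<Sum>b\<in>B. F a b * delta (m a b) w) * K w) = (\<Sum>a\<in>A. \<Sum>b\<in>B. F a b * K (m a b))"
proof -
  have "(\<Sum>w\<in>W. (\<Sum>a\<in>A. \<Sum>b\<in>B. F a b * delta (m a b) w) * K w)
      = (\<Sum>a\<in>A. \<Sum>b\<in>B. \<Sum>w\<in>W. F a b * (delta (m a b) w * K w))"
    by (simp add: sum_distrib_right mult.assoc sum.swap[of _ W])
  also have "\<dots> = (\<Sum>a\<in>A. \<Sum>b\<in>B. F a b * K (m a b))"
    using assms by (simp add: sum_distrib_left[symmetric] sum_delta_mult)
  finally show ?thesis .
qed

lemma conv_assoc:
  assumes G: "monoid G"
    and f: "in_group_algebra G f" and g: "in_group_algebra G g" and h: "in_group_algebra G h"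
  shows "conv G (conv G f g) h = conv G f (conv G g h)"
proof
  fix z
  let ?A = "supp f" and ?B = "supp g" and ?C = "supp h"
  let ?AB = "(\<lambda>(x, y). x \<otimes>\<^bsub>G\<^esub> y) ` (?A \<times> ?B)"
  let ?BC = "(\<lambda>(x, y). x \<otimes>\<^bsub>G\<^esub> y) ` (?B \<times> ?C)"
  have fin: "finite ?A" "finite ?B" "finite ?C" "finite ?AB" "finite ?BC"
    using f g h by (auto simp: in_group_algebra_iff)
  have assoc: "(a \<otimes>\<^bsub>G\<^esub> b) \<otimes>\<^bsub>G\<^esub> c = a \<otimes>\<^bsub>G\<^esub> (b \<otimes>\<^bsub>G\<^esub> c)" if "a \<in> ?A" "b \<in> ?B" "c \<in> ?C" for a b c
    using that f g h monoid.m_assoc[OF G] unfolding in_group_algebra_iff by blast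
  have "conv G (conv G f g) h z = (\<Sum>w\<in>?AB. \<Sum>c\<in>?C. conv G f g w * h c * delta (w \<otimes>\<^bsub>G\<^esub> c) z)"
    using fin supp_conv_subset[of G f g] by (intro conv_eq_sum) auto
  also have "\<dots> = (\<Sum>w\<in>?AB. (\<Sum>a\<in>?A. \<Sum>b\<in>?B. (f a * g b) * delta (a \<otimes>\<^bsub>G\<^esub> b) w) *
      (\<Sum>c\<in>?C. h c * delta (w \<otimes>\<^bsub>G\<^esub> c) z))"
    using fin by (simp add: conv_eq_sum[of ?A ?B] sum_distrib_left mult.assoc)
  also have "\<dots> = (\<Sum>a\<in>?A. \<Sum>b\<in>?B. (f a * g b) * (\<Sum>c\<in>?C. h c * delta ((a \<otimes>\<^bsub>G\<^esub> b) \<otimes>\<^bsub>G\<^esub> c) z))"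
    using fin by (intro sum_sum_delta_mult) auto
  also have "\<dots> = (\<Sum>a\<in>?A. f a * (\<Sum>b\<in>?B. \<Sum>c\<in>?C. (g b * h c) * delta (a \<otimes>\<^bsub>G\<^esub> (b \<otimes>\<^bsub>G\<^esub> c)) z))"
    by (simp add: assoc sum_distrib_left mult_ac cong: sum.cong)
  also have "\<dots> = (\<Sum>a\<in>?A. f a * (\<Sum>v\<in>?BC. (\<Sum>b\<in>?B. \<Sum>c\<in>?C. (g b * h c) * delta (b \<otimes>\<^bsub>G\<^esub> c) v) *
      delta (a \<otimes>\<^bsub>G\<^esub> v) z))"
    using fin by (subst sum_sum_delta_mult) auto
  also have "\<dots> = (\<Sum>a\<in>?A. \<Sum>v\<in>?BC. f a * ((\<Sum>b\<in>?B. \<Sum>c\<in>?C. (g b * h c) * delta (b \<otimes>\<^bsub>G\<^esub> c) v) *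
      delta (a \<otimes>\<^bsub>G\<^esub> v) z))"
    by (simp only: sum_distrib_left)
  also have "\<dots> = (\<Sum>a\<in>?A. \<Sum>v\<in>?BC. f a * conv G g h v * delta (a \<otimes>\<^bsub>G\<^esub> v) z)"
    using fin by (simp add: conv_eq_sum[of ?B ?C] mult.assoc)
  also have "\<dots> = conv G f (conv G g h) z"
    using fin supp_conv_subset[of G g h] by (intro conv_eq_sum[symmetric]) auto
  finally show "conv G (conv G f g) h z = conv G f (conv G g h) z" .
qed


section \<open>Matrices over the group algebra\<close>

lemma mat_mult_apply:
  "i \<in> {1..n} \<Longrightarrow> j \<in> {1..n} \<Longrightarrow> mat_mult G n A B i j = (\<lambda>z. \<Sum>k\<in>{1..n}. conv G (A i k) (B k j) z)"
  by (simp add: mat_mult_def)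

lemma mat_mult_outside: "i \<notin> {1..n} \<or> j \<notin> {1..n} \<Longrightarrow> mat_mult G n A B i j = (\<lambda>_. 0)"
  by (auto simp: mat_mult_def)

lemma mat_one_apply:
  "i \<in> {1..n} \<Longrightarrow> j \<in> {1..n} \<Longrightarrow> mat_one G n i j = (if i = j then delta \<one>\<^bsub>G\<^esub> else (\<lambda>_. 0))"
  by (simp add: mat_one_def)

lemma is_mat_mult:
  assumes G: "monoid G" and A: "is_mat G n A" and B: "is_mat G n B"
  shows "is_mat G n (mat_mult G n A B)"
proof -
  have "in_group_algebra G (mat_mult G n A B i j)" for i j
  proof (cases "i \<in> {1..n} \<and> j \<in> {1..n}")
    case True
    then show ?thesis
      using A B by (auto simp: mat_mult_apply is_mat_def
          intro!: in_group_algebra_sum in_group_algebra_conv[OF G])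
  qed (auto simp: mat_mult_outside in_group_algebra_zero)
  then show ?thesis
    by (auto simp: is_mat_def mat_mult_outside)
qed

lemma mat_mult_assoc:
  assumes G: "monoid G" and A: "is_mat G n A" and B: "is_mat G n B" and C: "is_mat G n C"
  shows "mat_mult G n (mat_mult G n A B) C = mat_mult G n A (mat_mult G n B C)"
proof (intro ext)
  fix i j z
  have gA: "\<And>i j. in_group_algebra G (A i j)" and gB: "\<And>i j. in_group_algebra G (B i j)"
    and gC: "\<And>i j. in_group_algebra G (C i j)"
    using A B C by (auto simp: is_mat_def)
  have fin: "\<And>f. in_group_algebra G f \<Longrightarrow> finite (supp f)"
    by (simp add: in_group_algebra_iff)
  show "mat_mult G n (mat_mult G n A B) C i j z = mat_mult G n A (mat_mult G n B C) i j z"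
  proof (cases "i \<in> {1..n} \<and> j \<in> {1..n}")
    case False
    then show ?thesis by (auto simp: mat_mult_outside)
  next
    case True
    then have i: "i \<in> {1..n}" and j: "j \<in> {1..n}" by auto
    have "mat_mult G n (mat_mult G n A B) C i j z
        = (\<Sum>k\<in>{1..n}. conv G (\<lambda>z. \<Sum>l\<in>{1..n}. conv G (A i l) (B l k) z) (C k j) z)"
      unfolding mat_mult_apply[OF i j] by (intro sum.cong refl) (simp add: mat_mult_apply[OF i])
    also have "\<dots> = (\<Sum>k\<in>{1..n}. \<Sum>l\<in>{1..n}. conv G (conv G (A i l) (B l k)) (C k j) z)"
      using gA gB gC by (simp add: conv_sum_left fin)
    also have "\<dots> = (\<Sum>k\<in>{1..n}. \<Sum>l\<in>{1..n}. conv G (A i l) (conv G (B l k) (C k j)) z)"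
      by (simp add: conv_assoc[OF G gA gB gC])
    also have "\<dots> = (\<Sum>l\<in>{1..n}. \<Sum>k\<in>{1..n}. conv G (A i l) (conv G (B l k) (C k j)) z)"
      by (rule sum.swap)
    also have "\<dots> = (\<Sum>l\<in>{1..n}. conv G (A i l) (\<lambda>z. \<Sum>k\<in>{1..n}. conv G (B l k) (C k j) z) z)"
      using gA gB gC by (simp add: conv_sum_right fin)
    also have "\<dots> = mat_mult G n A (mat_mult G n B C) i j z"
      unfolding mat_mult_apply[OF i j] by (intro sum.cong refl) (simp add: mat_mult_apply[OF _ j])
    finally show ?thesis .
  qed
qed

lemma is_mat_one: "monoid G \<Longrightarrow> is_mat G n (mat_one G n)"
  by (auto simp: is_mat_def mat_one_def in_group_algebra_delta in_group_algebra_zero)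

lemma mat_one_left:
  assumes G: "monoid G" and A: "is_mat G n A"
  shows "mat_mult G n (mat_one G n) A = A"
proof (intro ext)
  fix i j z
  have gA: "\<And>i j. in_group_algebra G (A i j)"
    using A by (simp add: is_mat_def)
  show "mat_mult G n (mat_one G n) A i j z = A i j z"
  proof (cases "i \<in> {1..n} \<and> j \<in> {1..n}")
    case False
    then show ?thesis
      using A by (auto simp: mat_mult_outside is_mat_def)
  next
    case True
    then have i: "i \<in> {1..n}" and j: "j \<in> {1..n}"
      by auto
    have "mat_mult G n (mat_one G n) A i j z = (\<Sum>k\<in>{1..n}. conv G (mat_one G n i k) (A k j) z)"
      using i j by (simp add: mat_mult_apply)
    also have "\<dots> = (\<Sum>k\<in>{1..n}. if k = i then A i j z else 0)"
      using i by (intro sum.cong refl) (auto simp: mat_one_apply conv_delta_one_left[OF G gA])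
    also have "\<dots> = A i j z"
      using i j by simp
    finally show ?thesis .
  qed
qed

lemma mat_one_right:
  assumes G: "monoid G" and A: "is_mat G n A"
  shows "mat_mult G n A (mat_one G n) = A"
proof (intro ext)
  fix i j z
  have gA: "\<And>i j. in_group_algebra G (A i j)"
    using A by (simp add: is_mat_def)
  show "mat_mult G n A (mat_one G n) i j z = A i j z"
  proof (cases "i \<in> {1..n} \<and> j \<in> {1..n}")
    case False
    then show ?thesis
      using A by (auto simp: mat_mult_outside is_mat_def)
  next
    case True
    then have i: "i \<in> {1..n}" and j: "j \<in> {1..n}"
      by auto
    have "mat_mult G n A (mat_one G n) i j z = (\<Sum>k\<in>{1..n}. conv G (A i k) (mat_one G n k j) z)"
      using i j by (simp add: mat_mult_apply)
    also have "\<dots> = (\<Sum>k\<in>{1..n}. if k = j then A i j z else 0)"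
      using j by (intro sum.cong refl) (auto simp: mat_one_apply conv_delta_one_right[OF G gA])
    also have "\<dots> = A i j z"
      using i j by simp
    finally show ?thesis .
  qed
qed

definition Mat :: "('g, 'b) monoid_scheme \<Rightarrow> nat \<Rightarrow> 'g gmat monoid" where
  "Mat G n = \<lparr>carrier = {A. is_mat G n A}, mult = mat_mult G n, one = mat_one G n\<rparr>"

lemma monoid_Mat: "monoid G \<Longrightarrow> monoid (Mat G n)"
  by (rule monoidI)
    (simp_all add: Mat_def is_mat_mult is_mat_one mat_mult_assoc mat_one_left mat_one_right)

lemma GL_eq_units_of_Mat: "GL G n = units_of (Mat G n)"
  by (auto simp: GL_def units_of_def Units_def Mat_def)

lemma group_GL: "monoid G \<Longrightarrow> group (GL G n)"
  unfolding GL_eq_units_of_Mat by (rule monoid.units_group[OF monoid_Mat])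

lemma mult_GL: "A \<otimes>\<^bsub>GL G n\<^esub> B = mat_mult G n A B"
  by (simp add: GL_def)

lemma one_GL: "\<one>\<^bsub>GL G n\<^esub> = mat_one G n"
  by (simp add: GL_def)

lemma GL_inverse_pair:
  assumes G: "monoid G" and "is_mat G n A" "is_mat G n B"
    and "mat_mult G n A B = mat_one G n" "mat_mult G n B A = mat_one G n"
  shows "A \<in> carrier (GL G n)" and "inv\<^bsub>GL G n\<^esub> A = B"
proof -
  interpret GL: group "GL G n" by (rule group_GL[OF G])
  show A: "A \<in> carrier (GL G n)"
    using assms by (auto simp: GL_def)
  have "B \<in> carrier (GL G n)"
    using assms by (auto simp: GL_def)
  with A show "inv\<^bsub>GL G n\<^esub> A = B"
    using assms by (intro GL.inv_equality) (simp_all add: mult_GL one_GL)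
qed


section \<open>Homogeneous matrices\<close>

definition homogeneous :: "('g, 'b) monoid_scheme \<Rightarrow> ('g \<Rightarrow> 'p) \<Rightarrow> 'p \<Rightarrow> 'g gmat \<Rightarrow> bool" where
  "homogeneous G \<rho> d A \<longleftrightarrow> (\<forall>i j z. A i j z \<noteq> 0 \<longrightarrow> z \<in> carrier G \<and> \<rho> z = d)"

lemma homogeneous_mat_mult:
  assumes G: "monoid G" and \<rho>: "\<rho> \<in> hom G P"
    and A: "homogeneous G \<rho> d A" and B: "homogeneous G \<rho> e B"
  shows "homogeneous G \<rho> (d \<otimes>\<^bsub>P\<^esub> e) (mat_mult G n A B)"
  unfolding homogeneous_def
proof (intro allI impI)
  fix i j z
  assume nz: "mat_mult G n A B i j z \<noteq> 0"
  then have "i \<in> {1..n} \<and> j \<in> {1..n}"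
    by (cases "i \<in> {1..n} \<and> j \<in> {1..n}") (auto simp: mat_mult_outside)
  then have "(\<Sum>k\<in>{1..n}. conv G (A i k) (B k j) z) \<noteq> 0"
    using nz by (simp add: mat_mult_apply)
  then obtain k where "z \<in> supp (conv G (A i k) (B k j))"
    by (auto simp: supp_def intro: sum.not_neutral_contains_not_neutral)
  then obtain x y where "A i k x \<noteq> 0" "B k j y \<noteq> 0" "z = x \<otimes>\<^bsub>G\<^esub> y"
    using supp_conv_subset[of G "A i k" "B k j"] by (auto simp: supp_def)
  then show "z \<in> carrier G \<and> \<rho> z = d \<otimes>\<^bsub>P\<^esub> e"
    using A B \<rho> monoid.m_closed[OF G] by (auto simp: homogeneous_def hom_mult)
qed

lemma homogeneous_mat_one: "monoid G \<Longrightarrow> homogeneous G \<rho> (\<rho> \<one>\<^bsub>G\<^esub>) (mat_one G n)"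
  by (auto simp: homogeneous_def mat_one_def delta_def)

lemma homogeneous_mat_one_degree: "n \<ge> 1 \<Longrightarrow> homogeneous G \<rho> d (mat_one G n) \<Longrightarrow> d = \<rho> \<one>\<^bsub>G\<^esub>"
  unfolding homogeneous_def by (drule spec[of _ 1], drule spec[of _ 1], drule spec[of _ "\<one>\<^bsub>G\<^esub>"])
    (simp add: mat_one_def delta_def)

section \<open>Matrices differing from a scalar matrix in one or two rows\<close>

definition row_mat :: "nat \<Rightarrow> nat \<Rightarrow> nat \<Rightarrow> ('g \<Rightarrow> complex) \<Rightarrow> ('g \<Rightarrow> complex) \<Rightarrow> ('g \<Rightarrow> complex) \<Rightarrow> 'g gmat"
  where "row_mat n i j d e r = (\<lambda>p q. if p \<in> {1..n} \<and> q \<in> {1..n} then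
      (if p = i then (if q = i then d else if q = j then e else (\<lambda>_. 0))
       else if p = q then r else (\<lambda>_. 0)) else (\<lambda>_. 0))"

definition two_row_mat :: "nat \<Rightarrow> nat \<Rightarrow> nat \<Rightarrow> ('g \<Rightarrow> complex) \<Rightarrow> ('g \<Rightarrow> complex) \<Rightarrow>
    nat \<Rightarrow> nat \<Rightarrow> ('g \<Rightarrow> complex) \<Rightarrow> ('g \<Rightarrow> complex) \<Rightarrow> ('g \<Rightarrow> complex) \<Rightarrow> 'g gmat"
  where "two_row_mat n i j a1 b1 s t a2 b2 c = (\<lambda>p q. if p \<in> {1..n} \<and> q \<in> {1..n} then
      (if p = i then (if q = i then a1 else if q = j then b1 else (\<lambda>_. 0))
       else if p = s then (if q = s then a2 else if q = t then b2 else (\<lambda>_. 0))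
       else if p = q then c else (\<lambda>_. 0)) else (\<lambda>_. 0))"

definition tri_mat :: "nat \<Rightarrow> nat \<Rightarrow> nat \<Rightarrow> nat \<Rightarrow> ('g \<Rightarrow> complex) \<Rightarrow> ('g \<Rightarrow> complex) \<Rightarrow>
    ('g \<Rightarrow> complex) \<Rightarrow> ('g \<Rightarrow> complex) \<Rightarrow> ('g \<Rightarrow> complex) \<Rightarrow> ('g \<Rightarrow> complex) \<Rightarrow> 'g gmat"
  where "tri_mat n i j k ii ij ik kk kj dg = (\<lambda>p q. if p \<in> {1..n} \<and> q \<in> {1..n} then
      (if p = i then (if q = i then ii else if q = j then ij else if q = k then ik else (\<lambda>_. 0))
       else if p = k then (if q = k then kk else if q = j then kj else (\<lambda>_. 0))
       else if p = q then dg else (\<lambda>_. 0)) else (\<lambda>_. 0))"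

lemma row_mat_apply:
  "p \<in> {1..n} \<Longrightarrow> q \<in> {1..n} \<Longrightarrow> row_mat n i j d e r p q =
    (if p = i then (if q = i then d else if q = j then e else (\<lambda>_. 0))
     else if p = q then r else (\<lambda>_. 0))"
  by (simp add: row_mat_def)

lemma two_row_mat_apply:
  "p \<in> {1..n} \<Longrightarrow> q \<in> {1..n} \<Longrightarrow> two_row_mat n i j a1 b1 s t a2 b2 c p q =
    (if p = i then (if q = i then a1 else if q = j then b1 else (\<lambda>_. 0))
     else if p = s then (if q = s then a2 else if q = t then b2 else (\<lambda>_. 0))
     else if p = q then c else (\<lambda>_. 0))"
  by (simp add: two_row_mat_def)

lemma tri_mat_apply:
  "p \<in> {1..n} \<Longrightarrow> q \<in> {1..n} \<Longrightarrow> tri_mat n i j k ii ij ik kk kj dg p q =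
    (if p = i then (if q = i then ii else if q = j then ij else if q = k then ik else (\<lambda>_. 0))
     else if p = k then (if q = k then kk else if q = j then kj else (\<lambda>_. 0))
     else if p = q then dg else (\<lambda>_. 0))"
  by (simp add: tri_mat_def)

lemma is_mat_row_mat:
  "in_group_algebra G d \<Longrightarrow> in_group_algebra G e \<Longrightarrow> in_group_algebra G r \<Longrightarrow>
    is_mat G n (row_mat n i j d e r)"
  by (auto simp: is_mat_def row_mat_def in_group_algebra_zero)

lemma mat_one_eq_row_mat:
  "i \<in> {1..n} \<Longrightarrow> i \<noteq> j \<Longrightarrow> mat_one G n = row_mat n i j (delta \<one>\<^bsub>G\<^esub>) (\<lambda>_. 0) (delta \<one>\<^bsub>G\<^esub>)"
  by (auto simp: mat_one_def row_mat_def fun_eq_iff)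

lemma conv_row_mat:
  "conv G f (row_mat n i j d e r p q) = row_mat n i j (conv G f d) (conv G f e) (conv G f r) p q"
  unfolding row_mat_def by (simp only: if_distrib[of "conv G f"] conv_zero_right)

lemma mat_mult_row_mat_apply:
  assumes s: "s \<in> {1..n}" and t: "t \<in> {1..n}" and st: "s \<noteq> t"
    and p: "p \<in> {1..n}" and q: "q \<in> {1..n}"
  shows "mat_mult G n A (row_mat n s t d e r) p q =
    (\<lambda>z. conv G (A p q) (if q = s then d else r) z + (if q = t then conv G (A p s) e z else 0))"
proof
  fix z
  let ?B = "row_mat n s t d e r"
  let ?f = "\<lambda>k. conv G (A p k) (?B k q) z"
  have zero: "?f k = 0" if "k \<in> {1..n}" "k \<noteq> q" "\<not> (k = s \<and> q = t)" for k
    using that q by (auto simp: row_mat_def)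
  have "mat_mult G n A ?B p q z = sum ?f {1..n}"
    using p q by (simp add: mat_mult_apply)
  also have "\<dots> = (if q = t then ?f q + ?f s else ?f q)"
  proof (cases "q = t")
    case True
    then have "sum ?f {1..n} = sum ?f {q, s}"
      using s q zero by (intro sum.mono_neutral_right) auto
    then show ?thesis
      using True st by simp
  next
    case False
    then have "sum ?f {1..n} = sum ?f {q}"
      using q zero by (intro sum.mono_neutral_right) auto
    then show ?thesis
      using False by simp
  qed
  also have "\<dots>
      = conv G (A p q) (if q = s then d else r) z + (if q = t then conv G (A p s) e z else 0)"
    using q s t st by (auto simp: row_mat_def)
  finally show "mat_mult G n A ?B p q z
      = conv G (A p q) (if q = s then d else r) z + (if q = t then conv G (A p s) e z else 0)" .
qed

lemma mat_mult_eqI: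
  assumes "\<And>p q. p \<in> {1..n} \<Longrightarrow> q \<in> {1..n} \<Longrightarrow> mat_mult G n A B p q = M p q"
    and "\<And>p q. p \<notin> {1..n} \<or> q \<notin> {1..n} \<Longrightarrow> M p q = (\<lambda>_. 0)"
  shows "mat_mult G n A B = M"
proof (intro ext)
  fix p q z
  show "mat_mult G n A B p q z = M p q z"
    using assms[of p q] by (cases "p \<in> {1..n} \<and> q \<in> {1..n}") (auto simp: mat_mult_outside)
qed

lemma mat_mult_row_mat_same_row:
  assumes "i \<in> {1..n}" "j \<in> {1..n}" "i \<noteq> j"
  shows "mat_mult G n (row_mat n i j d1 e1 r1) (row_mat n i j d2 e2 r2) =
    row_mat n i j (conv G d1 d2) (\<lambda>z. conv G e1 r2 z + conv G d1 e2 z) (conv G r1 r2)" (is "?A = ?B")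
proof (rule mat_mult_eqI)
  fix p q
  assume pq: "p \<in> {1..n}" "q \<in> {1..n}"
  show "?A p q = ?B p q"
    using assms(3) unfolding mat_mult_row_mat_apply[OF assms(1,2,3) pq] row_mat_apply[OF pq]
      row_mat_apply[OF pq(1) assms(1)] by simp
qed (auto simp: row_mat_def)

lemma mat_mult_row_mat_distinct_rows:
  assumes "i \<in> {1..n}" "j \<in> {1..n}" "s \<in> {1..n}" "t \<in> {1..n}"
    and "i \<noteq> j" "s \<noteq> t" "i \<noteq> s" "j \<noteq> s" "t \<noteq> i"
  shows "mat_mult G n (row_mat n i j d1 e1 r1) (row_mat n s t d2 e2 r2) =
    two_row_mat n i j (conv G d1 r2) (conv G e1 r2) s t (conv G r1 d2) (conv G r1 e2) (conv G r1 r2)"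
    (is "?A = ?B")
proof (rule mat_mult_eqI)
  fix p q
  assume pq: "p \<in> {1..n}" "q \<in> {1..n}"
  show "?A p q = ?B p q"
    using assms(5-9) unfolding mat_mult_row_mat_apply[OF assms(3,4,6) pq] row_mat_apply[OF pq]
      row_mat_apply[OF pq(1) assms(3)] two_row_mat_apply[OF pq] by simp
qed (auto simp: two_row_mat_def)

lemma mat_mult_row_mat_common_row:
  assumes "i \<in> {1..n}" "j \<in> {1..n}" "k \<in> {1..n}" "i \<noteq> j" "j \<noteq> k" "i \<noteq> k"
  shows "mat_mult G n (row_mat n i k d3 e3 r3) (row_mat n i j d1 e1 r1) =
    tri_mat n i j k (conv G d3 d1) (conv G d3 e1) (conv G e3 r1) (conv G r3 r1) (\<lambda>_. 0) (conv G r3 r1)"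
    (is "?A = ?B")
proof (rule mat_mult_eqI)
  fix p q
  assume pq: "p \<in> {1..n}" "q \<in> {1..n}"
  show "?A p q = ?B p q"
    using assms(4-6) unfolding mat_mult_row_mat_apply[OF assms(1,2,4) pq] row_mat_apply[OF pq]
      row_mat_apply[OF pq(1) assms(1)] tri_mat_apply[OF pq] by simp
qed (auto simp: tri_mat_def)

lemma mat_mult_tri_mat_row_mat_ik:
  assumes "i \<in> {1..n}" "j \<in> {1..n}" "k \<in> {1..n}" "i \<noteq> j" "j \<noteq> k" "i \<noteq> k"
  shows "mat_mult G n (tri_mat n i j k ii ij ik kk kj dg) (row_mat n i k d e r) =
    tri_mat n i j k (conv G ii d) (conv G ij r) (\<lambda>z. conv G ik r z + conv G ii e z) (conv G kk r)
      (conv G kj r) (conv G dg r)" (is "?A = ?B")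
proof (rule mat_mult_eqI)
  fix p q
  assume pq: "p \<in> {1..n}" "q \<in> {1..n}"
  show "?A p q = ?B p q"
    using assms(4-6) unfolding mat_mult_row_mat_apply[OF assms(1,3,6) pq] tri_mat_apply[OF pq]
      tri_mat_apply[OF pq(1) assms(1)] by simp
qed (auto simp: tri_mat_def)

lemma mat_mult_tri_mat_row_mat_kj:
  assumes "i \<in> {1..n}" "j \<in> {1..n}" "k \<in> {1..n}" "i \<noteq> j" "j \<noteq> k" "i \<noteq> k"
  shows "mat_mult G n (tri_mat n i j k ii ij ik kk kj dg) (row_mat n k j d e r) =
    tri_mat n i j k (conv G ii r) (\<lambda>z. conv G ij r z + conv G ik e z) (conv G ik d) (conv G kk d)
      (\<lambda>z. conv G kj r z + conv G kk e z) (conv G dg r)" (is "?A = ?B")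
proof (rule mat_mult_eqI)
  fix p q
  assume pq: "p \<in> {1..n}" "q \<in> {1..n}"
  show "?A p q = ?B p q"
    using assms(4-6) unfolding mat_mult_row_mat_apply[OF assms(3,2) not_sym[OF assms(5)] pq]
      tri_mat_apply[OF pq] tri_mat_apply[OF pq(1) assms(3)] by simp
qed (auto simp: tri_mat_def)

lemma two_row_mat_swap:
  "i \<noteq> s \<Longrightarrow> two_row_mat n i j a1 b1 s t a2 b2 c = two_row_mat n s t a2 b2 i j a1 b1 c"
  by (auto simp: two_row_mat_def fun_eq_iff)

lemma two_row_mat_eq_tri_mat:
  "j \<noteq> k \<Longrightarrow> i \<noteq> k \<Longrightarrow> two_row_mat n i j a1 b1 k j a2 b2 c = tri_mat n i j k a1 b1 (\<lambda>_. 0) a2 b2 c"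
  by (auto simp: two_row_mat_def tri_mat_def fun_eq_iff)

section \<open>The matrices \<open>C(\<xi>\<^sub>i\<^sub>,\<^sub>j)\<close>\<close>

(* M_ij^-1 differs from the identity only in row i, with x_j^-1 at (i,i) and x_i x_j^-1 - x_j^-1
   at (i,j); the inverse of C(xi_ij) = xi_ij M_ij is M_ij^-1 xi_ij^-1. *)
definition C_inv_mat :: "nat \<Rightarrow> nat \<Rightarrow> nat \<Rightarrow> sgen word set gmat" where
  "C_inv_mat n i j = row_mat n i j
     (delta (inv\<^bsub>SD n\<^esub> x_el n j \<otimes>\<^bsub>SD n\<^esub> inv\<^bsub>SD n\<^esub> xi_el n i j))
     (\<lambda>z. delta (x_el n i \<otimes>\<^bsub>SD n\<^esub> (inv\<^bsub>SD n\<^esub> x_el n j \<otimes>\<^bsub>SD n\<^esub> inv\<^bsub>SD n\<^esub> xi_el n i j)) z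
          - delta (inv\<^bsub>SD n\<^esub> x_el n j \<otimes>\<^bsub>SD n\<^esub> inv\<^bsub>SD n\<^esub> xi_el n i j) z)
     (delta (inv\<^bsub>SD n\<^esub> xi_el n i j))"

lemma C_mat_eq_row_mat:
  assumes ij: "(i, j) \<in> pw_gens n"
  shows "C_mat n i j = row_mat n i j
     (delta (xi_el n i j \<otimes>\<^bsub>SD n\<^esub> x_el n j))
     (\<lambda>z. delta (xi_el n i j) z
        - delta (xi_el n i j \<otimes>\<^bsub>SD n\<^esub> (x_el n j \<otimes>\<^bsub>SD n\<^esub> (x_el n i \<otimes>\<^bsub>SD n\<^esub> inv\<^bsub>SD n\<^esub> x_el n j))) z)
     (delta (xi_el n i j))"
proof -
  interpret group "SD n" by (rule group_SD)
  define w where "w = x_el n j \<otimes>\<^bsub>SD n\<^esub> x_el n i \<otimes>\<^bsub>SD n\<^esub> inv\<^bsub>SD n\<^esub> x_el n j"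
  have closed: "xi_el n i j \<in> carrier (SD n)" "x_el n i \<in> carrier (SD n)" "x_el n j \<in> carrier (SD n)"
    using ij by (auto simp: pw_gens_def intro: xi_el_closed x_el_closed)
  have M: "M_mat n i j = row_mat n i j (delta (x_el n j)) (\<lambda>z. delta \<one>\<^bsub>SD n\<^esub> z - delta w z)
      (delta \<one>\<^bsub>SD n\<^esub>)"
    unfolding M_mat_def row_mat_def w_def ..
  have "conv (SD n) (delta (xi_el n i j)) (\<lambda>z. delta \<one>\<^bsub>SD n\<^esub> z - delta w z)
      = (\<lambda>z. delta (xi_el n i j) z - delta (xi_el n i j \<otimes>\<^bsub>SD n\<^esub> w) z)"
    using closed by (simp add: conv_diff_right conv_delta_delta)
  then show ?thesis
    unfolding C_mat_def M conv_row_mat using closed by (simp add: conv_delta_delta w_def m_assoc)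
qed

lemmas conv_simps = conv_delta_delta conv_add_left conv_add_right conv_diff_left conv_diff_right

lemma C_mat_C_inv_mat:
  assumes ij: "(i, j) \<in> pw_gens n"
  shows "mat_mult (SD n) n (C_mat n i j) (C_inv_mat n i j) = mat_one (SD n) n"
    and "mat_mult (SD n) n (C_inv_mat n i j) (C_mat n i j) = mat_one (SD n) n"
proof -
  interpret group "SD n" by (rule group_SD)
  have R: "i \<in> {1..n}" "j \<in> {1..n}" "i \<noteq> j"
    using ij by (auto simp: pw_gens_def)
  have closed: "xi_el n i j \<in> carrier (SD n)" "x_el n i \<in> carrier (SD n)" "x_el n j \<in> carrier (SD n)"
    using ij R by (auto intro: xi_el_closed x_el_closed)
  show "mat_mult (SD n) n (C_mat n i j) (C_inv_mat n i j) = mat_one (SD n) n"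
    and "mat_mult (SD n) n (C_inv_mat n i j) (C_mat n i j) = mat_one (SD n) n"
    unfolding C_mat_eq_row_mat[OF ij] C_inv_mat_def mat_mult_row_mat_same_row[OF R]
      mat_one_eq_row_mat[OF R(1,3)]
    using closed by (simp_all add: conv_simps m_assoc fun_eq_iff)
qed

lemma C_mat_commute_disjoint:
  assumes ij: "(i, j) \<in> pw_gens n" and st: "(s, t) \<in> pw_gens n" and d: "{i, j} \<inter> {s, t} = {}"
  shows "mat_mult (SD n) n (C_mat n i j) (C_mat n s t) = mat_mult (SD n) n (C_mat n s t) (C_mat n i j)"
proof -
  interpret group "SD n" by (rule group_SD)
  have R: "i \<in> {1..n}" "j \<in> {1..n}" "s \<in> {1..n}" "t \<in> {1..n}"
    using ij st by (auto simp: pw_gens_def)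
  have D: "i \<noteq> j" "j \<noteq> i" "s \<noteq> t" "t \<noteq> s" "i \<noteq> s" "s \<noteq> i" "i \<noteq> t" "t \<noteq> i" "j \<noteq> s" "s \<noteq> j"
    "j \<noteq> t" "t \<noteq> j"
    using ij st d by (auto simp: pw_gens_def)
  have closed: "xi_el n i j \<in> carrier (SD n)" "xi_el n s t \<in> carrier (SD n)"
    "x_el n i \<in> carrier (SD n)" "x_el n j \<in> carrier (SD n)" "x_el n s \<in> carrier (SD n)"
    "x_el n t \<in> carrier (SD n)"
    using ij st R by (auto intro: xi_el_closed x_el_closed)
  have xi_comm: "xi_el n s t \<otimes>\<^bsub>SD n\<^esub> xi_el n i j = xi_el n i j \<otimes>\<^bsub>SD n\<^esub> xi_el n s t"
    using xi_el_commute_disjoint[OF ij st d] by simp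
  have xi_comm_assoc: "xi_el n s t \<otimes>\<^bsub>SD n\<^esub> (xi_el n i j \<otimes>\<^bsub>SD n\<^esub> y) = xi_el n i j \<otimes>\<^bsub>SD n\<^esub> (xi_el n s t \<otimes>\<^bsub>SD n\<^esub> y)"
    if "y \<in> carrier (SD n)" for y
    using closed that by (simp add: m_assoc[symmetric] xi_comm)
  show ?thesis
    unfolding C_mat_eq_row_mat[OF ij] C_mat_eq_row_mat[OF st]
      mat_mult_row_mat_distinct_rows[OF R D(1,3,5,9,8)]
      mat_mult_row_mat_distinct_rows[OF R(3,4,1,2) D(3,1,6,8,9)] two_row_mat_swap[OF D(6)]
    using closed D R ij st by (simp add: conv_simps m_assoc fun_eq_iff x_past_xi xi_comm xi_comm_assoc)
qed

lemma C_mat_commute_common_target: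
  assumes R: "i \<in> {1..n}" "j \<in> {1..n}" "k \<in> {1..n}" and D0: "i \<noteq> j" "j \<noteq> k" "i \<noteq> k"
  shows "mat_mult (SD n) n (C_mat n i j) (C_mat n k j) = mat_mult (SD n) n (C_mat n k j) (C_mat n i j)"
proof -
  interpret group "SD n" by (rule group_SD)
  have ij: "(i, j) \<in> pw_gens n" and kj: "(k, j) \<in> pw_gens n"
    using R D0 by (auto simp: pw_gens_def)
  have D: "i \<noteq> j" "j \<noteq> i" "k \<noteq> j" "j \<noteq> k" "i \<noteq> k" "k \<noteq> i"
    using D0 by auto
  have closed: "xi_el n i j \<in> carrier (SD n)" "xi_el n k j \<in> carrier (SD n)"
    "x_el n i \<in> carrier (SD n)" "x_el n j \<in> carrier (SD n)" "x_el n k \<in> carrier (SD n)"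
    using ij kj R by (auto intro: xi_el_closed x_el_closed)
  have xi_comm: "xi_el n k j \<otimes>\<^bsub>SD n\<^esub> xi_el n i j = xi_el n i j \<otimes>\<^bsub>SD n\<^esub> xi_el n k j"
    using xi_el_commute_common_target[OF R D0] by simp
  have xi_comm_assoc: "xi_el n k j \<otimes>\<^bsub>SD n\<^esub> (xi_el n i j \<otimes>\<^bsub>SD n\<^esub> y) = xi_el n i j \<otimes>\<^bsub>SD n\<^esub> (xi_el n k j \<otimes>\<^bsub>SD n\<^esub> y)"
    if "y \<in> carrier (SD n)" for y
    using closed that by (simp add: m_assoc[symmetric] xi_comm)
  show ?thesis
    unfolding C_mat_eq_row_mat[OF ij] C_mat_eq_row_mat[OF kj]
      mat_mult_row_mat_distinct_rows[OF R(1,2,3,2) D(1,3,5,4,2)]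
      mat_mult_row_mat_distinct_rows[OF R(3,2,1,2) D(3,1,6,2,4)] two_row_mat_swap[OF D(6)]
    using closed D R ij kj by (simp add: conv_simps m_assoc fun_eq_iff x_past_xi xi_comm xi_comm_assoc)
qed

lemma C_mat_triangle:
  assumes R: "i \<in> {1..n}" "j \<in> {1..n}" "k \<in> {1..n}" and D0: "i \<noteq> j" "j \<noteq> k" "i \<noteq> k"
  shows "mat_mult (SD n) n (mat_mult (SD n) n (C_mat n i j) (C_mat n k j)) (C_mat n i k)
    = mat_mult (SD n) n (mat_mult (SD n) n (C_mat n i k) (C_mat n i j)) (C_mat n k j)"
proof -
  interpret group "SD n" by (rule group_SD)
  have ij: "(i, j) \<in> pw_gens n" and kj: "(k, j) \<in> pw_gens n" and ik: "(i, k) \<in> pw_gens n"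
    using R D0 by (auto simp: pw_gens_def)
  have D: "i \<noteq> j" "j \<noteq> i" "k \<noteq> j" "j \<noteq> k" "i \<noteq> k" "k \<noteq> i"
    using D0 by auto
  have closed: "xi_el n i j \<in> carrier (SD n)" "xi_el n k j \<in> carrier (SD n)" "xi_el n i k \<in> carrier (SD n)"
    "x_el n i \<in> carrier (SD n)" "x_el n j \<in> carrier (SD n)" "x_el n k \<in> carrier (SD n)"
    using ij kj ik R by (auto intro: xi_el_closed x_el_closed)
  have xi_comm: "xi_el n i k \<otimes>\<^bsub>SD n\<^esub> (xi_el n i j \<otimes>\<^bsub>SD n\<^esub> xi_el n k j)
      = xi_el n i j \<otimes>\<^bsub>SD n\<^esub> (xi_el n k j \<otimes>\<^bsub>SD n\<^esub> xi_el n i k)"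
    using xi_el_triangle[OF R D0] closed by (simp add: m_assoc)
  have xi_comm_assoc: "xi_el n i k \<otimes>\<^bsub>SD n\<^esub> (xi_el n i j \<otimes>\<^bsub>SD n\<^esub> (xi_el n k j \<otimes>\<^bsub>SD n\<^esub> y))
      = xi_el n i j \<otimes>\<^bsub>SD n\<^esub> (xi_el n k j \<otimes>\<^bsub>SD n\<^esub> (xi_el n i k \<otimes>\<^bsub>SD n\<^esub> y))"
    if "y \<in> carrier (SD n)" for y
    using closed that by (simp add: m_assoc[symmetric] xi_comm)
  show ?thesis
    unfolding C_mat_eq_row_mat[OF ij] C_mat_eq_row_mat[OF kj] C_mat_eq_row_mat[OF ik]
      mat_mult_row_mat_distinct_rows[OF R(1,2,3,2) D(1,3,5,4,2)] two_row_mat_eq_tri_mat[OF D(4,5)]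
      mat_mult_tri_mat_row_mat_ik[OF R D0] mat_mult_row_mat_common_row[OF R D0]
      mat_mult_tri_mat_row_mat_kj[OF R D0]
    using closed D R ij kj ik by (simp add: conv_simps m_assoc fun_eq_iff x_past_xi xi_comm xi_comm_assoc)
qed

lemma is_mat_C_mat: "(i, j) \<in> pw_gens n \<Longrightarrow> is_mat (SD n) n (C_mat n i j)"
  and is_mat_C_inv_mat: "(i, j) \<in> pw_gens n \<Longrightarrow> is_mat (SD n) n (C_inv_mat n i j)"
proof -
  assume ij: "(i, j) \<in> pw_gens n"
  interpret group "SD n" by (rule group_SD)
  have c: "xi_el n i j \<in> carrier (SD n)" "x_el n i \<in> carrier (SD n)" "x_el n j \<in> carrier (SD n)"
    using ij by (auto simp: pw_gens_def intro: xi_el_closed x_el_closed)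
  then show "is_mat (SD n) n (C_mat n i j)"
    unfolding C_mat_eq_row_mat[OF ij]
    by (intro is_mat_row_mat in_group_algebra_diff in_group_algebra_delta) auto
  from c show "is_mat (SD n) n (C_inv_mat n i j)"
    unfolding C_inv_mat_def
    by (intro is_mat_row_mat in_group_algebra_diff in_group_algebra_delta) auto
qed

lemma C_mat_in_GL: "(i, j) \<in> pw_gens n \<Longrightarrow> C_mat n i j \<in> carrier (GL (SD n) n)"
  and inv_GL_C_mat: "(i, j) \<in> pw_gens n \<Longrightarrow> inv\<^bsub>GL (SD n) n\<^esub> C_mat n i j = C_inv_mat n i j"
  using GL_inverse_pair[OF group.is_monoid[OF group_SD] is_mat_C_mat is_mat_C_inv_mat
      C_mat_C_inv_mat] by auto

lemma mccool_relations_C_mat: "mccool_relations (GL (SD n) n) n (\<lambda>(i, j). C_mat n i j)"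
proof -
  interpret GL: group "GL (SD n) n"
    by (rule group_GL[OF group.is_monoid[OF group_SD]])
  have C: "C_mat n i j \<in> carrier (GL (SD n) n)" if "i \<in> {1..n}" "j \<in> {1..n}" "i \<noteq> j" for i j
    using that by (simp add: C_mat_in_GL pw_gens_def)
  show ?thesis
    unfolding mccool_relations_def mult_GL prod.case
  proof (intro conjI allI impI)
    fix i j k
    assume ijk: "i \<in> {1..n}" "j \<in> {1..n}" "k \<in> {1..n}" "i \<noteq> j" "j \<noteq> k" "i \<noteq> k"
    have "mat_mult (SD n) n (C_mat n i k) (mat_mult (SD n) n (C_mat n i j) (C_mat n k j))
        = mat_mult (SD n) n (mat_mult (SD n) n (C_mat n i k) (C_mat n i j)) (C_mat n k j)"
      using GL.m_assoc[OF C C C] ijk by (simp add: mult_GL)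
    then show "mat_mult (SD n) n (mat_mult (SD n) n (C_mat n i j) (C_mat n k j)) (C_mat n i k)
        = mat_mult (SD n) n (C_mat n i k) (mat_mult (SD n) n (C_mat n i j) (C_mat n k j))"
      using C_mat_triangle[OF ijk] by simp
  qed (simp_all add: C_mat_commute_disjoint C_mat_commute_common_target)
qed

lemma PW_representation:
  obtains \<Psi> where "\<Psi> \<in> hom (PW n) (GL (SD n) n)"
    "\<And>i j. (i, j) \<in> pw_gens n \<Longrightarrow> \<Psi> (gen_class (PW_rels n) (i, j)) = C_mat n i j"
proof -
  interpret GL: group "GL (SD n) n"
    by (rule group_GL[OF group.is_monoid[OF group_SD]])
  have C: "(\<lambda>(i, j). C_mat n i j) \<in> pw_gens n \<rightarrow> carrier (GL (SD n) n)"
    using C_mat_in_GL by auto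
  then have "eval_word (GL (SD n) n) (\<lambda>(i, j). C_mat n i j) r = \<one>\<^bsub>GL (SD n) n\<^esub>"
    if "r \<in> PW_rels n" for r
    using GL.eval_PW_rels_if_mccool_relations mccool_relations_C_mat that by blast
  then have "\<exists>\<Psi> \<in> hom (PW n) (GL (SD n) n).
      \<forall>a\<in>pw_gens n. \<Psi> (gen_class (PW_rels n) a) = (case a of (i, j) \<Rightarrow> C_mat n i j)"
    unfolding PW_def by (intro presented_group_hom[OF GL.is_group C PW_rels_letters]) auto
  then show ?thesis
    using that by auto
qed

lemma homogeneous_row_mat:
  assumes "\<And>z. d z \<noteq> 0 \<Longrightarrow> z \<in> carrier G \<and> \<rho> z = D" "\<And>z. e z \<noteq> 0 \<Longrightarrow> z \<in> carrier G \<and> \<rho> z = D"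
    "\<And>z. r z \<noteq> 0 \<Longrightarrow> z \<in> carrier G \<and> \<rho> z = D"
  shows "homogeneous G \<rho> D (row_mat n i j d e r)"
  using assms unfolding homogeneous_def row_mat_def by auto

context
  fixes n i j :: nat and \<rho>
  assumes ij: "(i, j) \<in> pw_gens n" and \<rho>: "group_hom (SD n) (PW n) \<rho>"
    and \<rho>_x: "\<And>k. k \<in> {1..n} \<Longrightarrow> \<rho> (x_el n k) = \<one>\<^bsub>PW n\<^esub>"
    and \<rho>_xi: "\<rho> (xi_el n i j) = gen_class (PW_rels n) (i, j)"
begin

interpretation group_hom "SD n" "PW n" \<rho> by (rule \<rho>)

private lemma carrier_ij:
  "xi_el n i j \<in> carrier (SD n)" "x_el n i \<in> carrier (SD n)" "x_el n j \<in> carrier (SD n)"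
    "gen_class (PW_rels n) (i, j) \<in> carrier (PW n)"
  using ij by (auto simp: pw_gens_def intro: xi_el_closed x_el_closed gen_class_PW_closed)

lemma homogeneous_C_mat: "homogeneous (SD n) \<rho> (gen_class (PW_rels n) (i, j)) (C_mat n i j)"
  unfolding C_mat_eq_row_mat[OF ij]
  by (rule homogeneous_row_mat)
    (use carrier_ij \<rho>_x \<rho>_xi ij in \<open>auto simp: delta_def pw_gens_def split: if_splits\<close>)

lemma homogeneous_C_inv_mat:
  "homogeneous (SD n) \<rho> (inv\<^bsub>PW n\<^esub> gen_class (PW_rels n) (i, j)) (C_inv_mat n i j)"
  unfolding C_inv_mat_def
  by (rule homogeneous_row_mat)
    (use carrier_ij \<rho>_x \<rho>_xi ij in \<open>auto simp: delta_def pw_gens_def split: if_splits\<close>)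

end

lemmas PW_induct =
  presented_group_induct[where S = "pw_gens n" and R = "PW_rels n" for n, folded PW_def,
    consumes 1, case_names one gen inv_gen]

lemma homogeneous_PW_representation:
  assumes \<rho>: "\<rho> \<in> hom (SD n) (PW n)" and \<rho>_x: "\<And>k. k \<in> {1..n} \<Longrightarrow> \<rho> (x_el n k) = \<one>\<^bsub>PW n\<^esub>"
    and \<rho>_xi: "\<And>i j. (i, j) \<in> pw_gens n \<Longrightarrow> \<rho> (xi_el n i j) = gen_class (PW_rels n) (i, j)"
    and \<Psi>: "\<Psi> \<in> hom (PW n) (GL (SD n) n)"
    and \<Psi>_gen: "\<And>i j. (i, j) \<in> pw_gens n \<Longrightarrow> \<Psi> (gen_class (PW_rels n) (i, j)) = C_mat n i j"
    and g: "g \<in> carrier (PW n)"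
  shows "homogeneous (SD n) \<rho> g (\<Psi> g)"
proof -
  have SD: "monoid (SD n)"
    by (rule group.is_monoid[OF group_SD])
  have \<rho>_hom: "group_hom (SD n) (PW n) \<rho>"
    using \<rho> by (intro group_hom.intro group_hom_axioms.intro group_SD group_PW)
  interpret \<rho>: group_hom "SD n" "PW n" \<rho> by (rule \<rho>_hom)
  interpret \<Psi>: group_hom "PW n" "GL (SD n) n" \<Psi>
    using \<Psi> by (intro group_hom.intro group_hom_axioms.intro group_PW group_GL[OF SD])
  have \<Psi>_inv_gen: "\<Psi> (inv\<^bsub>PW n\<^esub> gen_class (PW_rels n) (i, j)) = C_inv_mat n i j"
    if "(i, j) \<in> pw_gens n" for i j
    using that \<Psi>_gen gen_class_PW_closed inv_GL_C_mat by simp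
  from g show ?thesis
  proof (induction rule: PW_induct)
    case one
    show ?case
      using homogeneous_mat_one[OF SD, of \<rho> n] by (simp add: one_GL)
  next
    case (gen a y)
    then obtain i j where a: "a = (i, j)" "(i, j) \<in> pw_gens n"
      by (cases a) auto
    then show ?case
      using homogeneous_mat_mult[OF SD \<rho> homogeneous_C_mat[OF a(2) \<rho>_hom \<rho>_x \<rho>_xi] gen.IH]
        gen.hyps \<Psi>_gen by (simp add: gen_class_PW_closed mult_GL)
  next
    case (inv_gen a y)
    then obtain i j where a: "a = (i, j)" "(i, j) \<in> pw_gens n"
      by (cases a) auto
    then show ?case
      using homogeneous_mat_mult[OF SD \<rho> homogeneous_C_inv_mat[OF a(2) \<rho>_hom \<rho>_x \<rho>_xi] inv_gen.IH]
        inv_gen.hyps \<Psi>_inv_gen by (simp add: gen_class_PW_closed mult_GL)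
  qed
qed

theorem theorem3p3:
  fixes n :: nat
  assumes "n \<ge> 2"
  shows "\<exists>\<Psi>. \<Psi> \<in> hom (PW n) (GL (SD n) n)
            \<and> (\<forall>i j. (i, j) \<in> pw_gens n \<longrightarrow> \<Psi> (gen_class (PW_rels n) (i, j)) = C_mat n i j)
            \<and> inj_on \<Psi> (carrier (PW n))"
proof -
  obtain \<rho> where \<rho>: "\<rho> \<in> hom (SD n) (PW n)"
    and \<rho>_x: "\<And>k. k \<in> {1..n} \<Longrightarrow> \<rho> (x_el n k) = \<one>\<^bsub>PW n\<^esub>"
    and \<rho>_xi: "\<And>i j. (i, j) \<in> pw_gens n \<Longrightarrow> \<rho> (xi_el n i j) = gen_class (PW_rels n) (i, j)"
    using SD_retraction[of n] by blast
  obtain \<Psi> where \<Psi>: "\<Psi> \<in> hom (PW n) (GL (SD n) n)"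
    and \<Psi>_gen: "\<And>i j. (i, j) \<in> pw_gens n \<Longrightarrow> \<Psi> (gen_class (PW_rels n) (i, j)) = C_mat n i j"
    using PW_representation[of n] by blast
  have "g = \<one>\<^bsub>PW n\<^esub>" if g: "g \<in> carrier (PW n)" and "\<Psi> g = \<one>\<^bsub>GL (SD n) n\<^esub>" for g
  proof -
    have "homogeneous (SD n) \<rho> g (mat_one (SD n) n)"
      using homogeneous_PW_representation[OF \<rho> \<rho>_x \<rho>_xi \<Psi> \<Psi>_gen g] that by (simp add: one_GL)
    then have "g = \<rho> \<one>\<^bsub>SD n\<^esub>"
      using assms by (intro homogeneous_mat_one_degree) auto
    then show ?thesis
      using hom_one[OF \<rho> group_SD group_PW] by simp
  qed
  then have "inj_on \<Psi> (carrier (PW n))"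
    by (subst inj_on_one_iff'[OF \<Psi> group_PW group_GL[OF group.is_monoid[OF group_SD]]]) blast
  then show ?thesis
    using \<Psi> \<Psi>_gen by auto
qed

end
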